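(* Let $D$ be a Dedekind domain with field of fractions $K$ and let $A$ be a $D$-algebra with standard assumptions. Let $P$ be a nonzero prime ideal of $D$. Then the following are equivalent: (1) $N_{D/P}(A/PA)\neq (0)$; (2) $D_P[X]\subsetneq \textnormal{Int}_K(A_P)$; (3) $D/P$ is finite and $A/PA$ is an algebraic $D/P$-algebra of bounded degree.
   Context: A $D$-algebra $A$ satisfies the standard assumptions if it is torsion-free as a $D$-module and $A\cap K = D$ inside $K\otimes_D A$; polynomials in $K[X]$ are evaluated in $K\otimes_D A$. $A_P=(D\setminus P)^{-1}A$ and $\textnormal{Int}_K(A_P)=\{f\in K[X]\mid f(A_P)\subseteq A_P\}$. For a commutative ring $R$ and $R$-algebra $C$, $N_R(C)=\{f\in R[X]\mid f(c)=0\ \forall c\in C\}$. An algebra over a field $F$ is algebraic of bounded degree if there is $n$ such that every element satisfies a nonzero polynomial over $F$ of degree at most $n$. *)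

theory Defs
  imports "HOL-Computational_Algebra.Polynomial" "HOL-Computational_Algebra.Fraction_Field"
begin

section \<open>Commutative ring notions (the domain D is the whole type 'd)\<close>

definition is_ideal :: "'a::comm_ring_1 set \<Rightarrow> bool" where
  "is_ideal I \<longleftrightarrow> 0 \<in> I \<and> (\<forall>x\<in>I. \<forall>y\<in>I. x + y \<in> I) \<and> (\<forall>r. \<forall>x\<in>I. r * x \<in> I)"

definition is_prime_ideal :: "'a::comm_ring_1 set \<Rightarrow> bool" where
  "is_prime_ideal P \<longleftrightarrow> is_ideal P \<and> P \<noteq> UNIV \<and> (\<forall>x y. x * y \<in> P \<longrightarrow> x \<in> P \<or> y \<in> P)"

definition is_maximal_ideal :: "'a::comm_ring_1 set \<Rightarrow> bool" where
  "is_maximal_ideal M \<longleftrightarrow> is_ideal M \<and> M \<noteq> UNIV \<and>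
     (\<forall>J. is_ideal J \<longrightarrow> M \<subseteq> J \<longrightarrow> J = M \<or> J = UNIV)"

definition ideal_span :: "'a::comm_ring_1 set \<Rightarrow> 'a set" where
  "ideal_span S = {x. \<exists>c. x = (\<Sum>s\<in>S. c s * s)}"

definition noetherian_ring :: "'a::comm_ring_1 itself \<Rightarrow> bool" where
  "noetherian_ring _ \<longleftrightarrow> (\<forall>I::'a set. is_ideal I \<longrightarrow> (\<exists>S. finite S \<and> I = ideal_span S))"

definition to_K :: "'a::idom \<Rightarrow> 'a fract" where
  "to_K x = Fract x 1"

definition integrally_closed :: "'a::idom itself \<Rightarrow> bool" where
  "integrally_closed _ \<longleftrightarrow> (\<forall>(x::'a fract) (f::'a poly). lead_coeff f = 1 \<and>
      poly (map_poly to_K f) x = 0 \<longrightarrow> (\<exists>d. x = to_K d))"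

definition dedekind_domain :: "'a::idom itself \<Rightarrow> bool" where
  "dedekind_domain T \<longleftrightarrow> noetherian_ring T \<and> integrally_closed T \<and>
     (\<forall>P::'a set. is_prime_ideal P \<and> P \<noteq> {0} \<longrightarrow> is_maximal_ideal P)"

text \<open>We model K \<otimes>_D A as a ring 'b together with an injective ring homomorphism
  \<phi> : K \<rightarrow> 'b with central image (a K-algebra), and A as a subset of 'b.
  Since A is torsion-free, A embeds into K \<otimes>_D A = (D\<setminus>0)^{-1} A, and this localisation is
  characterised by: every element is \<phi>(1/d) * a with d \<noteq> 0, a \<in> A.\<close>
definition standard_assumptions :: "('d::idom fract \<Rightarrow> 'b::ring_1) \<Rightarrow> 'b set \<Rightarrow> bool" where
  "standard_assumptions \<phi> A \<longleftrightarrow>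
     \<comment> \<open>\<phi> is an injective unital ring homomorphism with central image\<close>
     \<phi> 1 = 1 \<and> (\<forall>x y. \<phi> (x + y) = \<phi> x + \<phi> y) \<and> (\<forall>x y. \<phi> (x * y) = \<phi> x * \<phi> y) \<and>
     inj \<phi> \<and> (\<forall>x b. \<phi> x * b = b * \<phi> x) \<and>
     \<comment> \<open>A is a subring containing the image of D (the D-algebra structure)\<close>
     1 \<in> A \<and> (\<forall>a\<in>A. \<forall>b\<in>A. a + b \<in> A \<and> a - b \<in> A \<and> a * b \<in> A) \<and>
     (\<forall>d. \<phi> (to_K d) \<in> A) \<and>
     \<comment> \<open>'b is K \<otimes>_D A\<close>
     (\<forall>b. \<exists>d a. d \<noteq> 0 \<and> a \<in> A \<and> b = \<phi> (inverse (to_K d)) * a) \<and>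
     \<comment> \<open>A \<inter> K = D\<close>
     A \<inter> range \<phi> = \<phi> ` range to_K"

definition peval :: "('k::zero \<Rightarrow> 'b::semiring_1) \<Rightarrow> 'k poly \<Rightarrow> 'b \<Rightarrow> 'b" where
  "peval \<psi> f b = (\<Sum>i\<le>degree f. \<psi> (coeff f i) * b ^ i)"

definition loc_D :: "'d::idom set \<Rightarrow> 'd fract set" where
  "loc_D P = {Fract x s | x s. s \<notin> P}"

definition loc_A :: "('d::idom fract \<Rightarrow> 'b::ring_1) \<Rightarrow> 'b set \<Rightarrow> 'd set \<Rightarrow> 'b set" where
  "loc_A \<phi> A P = {\<phi> (inverse (to_K s)) * a | s a. s \<notin> P \<and> a \<in> A}"

definition Int_K :: "('d::idom fract \<Rightarrow> 'b::ring_1) \<Rightarrow> 'b set \<Rightarrow> 'd fract poly set" where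
  "Int_K \<phi> S = {f. \<forall>b\<in>S. peval \<phi> f b \<in> S}"

definition ext_ideal :: "('d::idom fract \<Rightarrow> 'b::ring_1) \<Rightarrow> 'b set \<Rightarrow> 'd set \<Rightarrow> 'b set" where
  "ext_ideal \<phi> A P = {x. \<exists>(n::nat) p a. (\<forall>i<n. p i \<in> P \<and> a i \<in> A) \<and>
                          x = (\<Sum>i<n. \<phi> (to_K (p i)) * a i)}"

text \<open>Elements of (D/P)[X] are represented by lifts g \<in> D[X]; g is zero mod P iff all its
  coefficients lie in P; g(\<bar>a\<bar>) = 0 in A/PA iff g(a) \<in> PA.
  N_{D/P}(A/PA) \<noteq> (0): some polynomial over D/P, nonzero, vanishes on all of A/PA.\<close>
definition null_ideal_mod_nonzero :: "('d::idom fract \<Rightarrow> 'b::ring_1) \<Rightarrow> 'b set \<Rightarrow> 'd set \<Rightarrow> bool" where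
  "null_ideal_mod_nonzero \<phi> A P \<longleftrightarrow>
     (\<exists>g::'d poly. (\<exists>i. coeff g i \<notin> P) \<and>
        (\<forall>a\<in>A. peval (\<phi> \<circ> to_K) g a \<in> ext_ideal \<phi> A P))"

definition quot_ring :: "'d::comm_ring_1 set \<Rightarrow> 'd set set" where
  "quot_ring P = (\<lambda>x. {y. x - y \<in> P}) ` UNIV"

text \<open>A/PA is an algebraic D/P-algebra of bounded degree: there is n such that every
  residue class a + PA is a root of a nonzero polynomial over D/P of degree \<le> n
  (the reduction mod P of g is nonzero and has degree \<le> n).\<close>
definition bounded_degree_mod :: "('d::idom fract \<Rightarrow> 'b::ring_1) \<Rightarrow> 'b set \<Rightarrow> 'd set \<Rightarrow> bool" where
  "bounded_degree_mod \<phi> A P \<longleftrightarrow>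
     (\<exists>n::nat. \<forall>a\<in>A. \<exists>g::'d poly. (\<exists>i. coeff g i \<notin> P) \<and> (\<forall>i>n. coeff g i \<in> P) \<and>
        peval (\<phi> \<circ> to_K) g a \<in> ext_ideal \<phi> A P)"

end

theory Submission
  imports Defs "Jordan_Normal_Form.Char_Poly"
begin

text \<open>The key fact is that \<open>P D\<^sub>P\<close> is principal, \<open>P D\<^sub>P = \<pi> D\<^sub>P\<close>: a nonzero ideal contains a
  product of nonzero primes, which yields \<open>x \<in> K \<setminus> D\<^sub>P\<close> with \<open>x P \<subseteq> D\<^sub>P\<close>, and the
  determinant trick makes some \<open>x p\<close> a unit. Consequently \<open>P A\<^sub>P = \<pi> A\<^sub>P\<close> and
  \<open>P A\<^sub>P \<inter> A = PA\<close>.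

  (1) \<open>\<Longrightarrow>\<close> (2): if \<open>g \<in> D[X]\<close>, nonzero mod \<open>P\<close>, maps \<open>A\<close> into \<open>PA\<close>, it maps \<open>A\<^sub>P\<close> into
  \<open>\<pi> A\<^sub>P\<close>, so \<open>g/\<pi> \<in> Int\<^sub>K(A\<^sub>P) \<setminus> D\<^sub>P[X]\<close>. (2) \<open>\<Longrightarrow>\<close> (1): some \<open>c \<in> P D\<^sub>P\<close> scales
  \<open>f \<in> Int\<^sub>K(A\<^sub>P) \<setminus> D\<^sub>P[X]\<close> to a polynomial over \<open>D\<^sub>P\<close> that is nonzero mod \<open>P\<close> and maps \<open>A\<close>
  into \<open>P A\<^sub>P \<inter> A = PA\<close>; clear its denominators, which are prime to \<open>P\<close>. (1) \<open>\<Longrightarrow>\<close> (3): every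
  \<open>d \<in> D\<close> is a root of \<open>g\<close> modulo \<open>P\<close>, so \<open>|D/P| \<le> deg g\<close>. (3) \<open>\<Longrightarrow>\<close> (1): with \<open>q = |D/P|\<close>,
  the powers of any \<open>a \<in> A\<close> take at most \<open>q\<^sup>n\<close> values modulo \<open>PA\<close>, so \<open>a\<close> is a root modulo
  \<open>PA\<close> of the product of all \<open>X\<^sup>j - X\<^sup>i\<close> with \<open>i < j \<le> q\<^sup>n\<close>.\<close>

interpretation to_K: inj_comm_ring_hom to_K
  by unfold_locales (simp_all add: to_K_def eq_fract Zero_fract_def One_fract_def)

lemmas to_K_hom_simps [simp] =
  to_K.hom_add to_K.hom_mult to_K.hom_uminus to_K.hom_minus to_K.hom_power

lemma Fract_eq_to_K_divide: "b \<noteq> 0 \<Longrightarrow> Fract a b = to_K a / to_K b"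
  by (simp add: to_K_def divide_fract_def inverse_fract mult_fract)

lemma fract_as_quotient: "\<exists>a b. b \<noteq> 0 \<and> (z :: 'a::idom fract) = to_K a / to_K b"
  by (cases z rule: Fract_cases) (use Fract_eq_to_K_divide in blast)

lemma is_ideal_zero: "is_ideal I \<Longrightarrow> 0 \<in> I"
  by (simp add: is_ideal_def)

lemma is_ideal_add: "is_ideal I \<Longrightarrow> x \<in> I \<Longrightarrow> y \<in> I \<Longrightarrow> x + y \<in> I"
  by (simp add: is_ideal_def)

lemma is_ideal_mult_left: "is_ideal I \<Longrightarrow> x \<in> I \<Longrightarrow> r * x \<in> I"
  by (simp add: is_ideal_def)

lemma is_ideal_mult_right: "is_ideal I \<Longrightarrow> x \<in> I \<Longrightarrow> x * r \<in> I"
  by (metis is_ideal_mult_left mult.commute)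

lemma is_ideal_diff: "is_ideal I \<Longrightarrow> x \<in> I \<Longrightarrow> y \<in> I \<Longrightarrow> x - y \<in> I"
  using is_ideal_add[of I x "(-1) * y"] is_ideal_mult_left[of I y "-1"] by simp

lemma is_ideal_sum: "is_ideal I \<Longrightarrow> (\<And>i. i \<in> S \<Longrightarrow> f i \<in> I) \<Longrightarrow> sum f S \<in> I"
  by (induct S rule: infinite_finite_induct) (auto simp: is_ideal_zero is_ideal_add)

lemma is_ideal_one_imp_UNIV: "is_ideal I \<Longrightarrow> 1 \<in> I \<Longrightarrow> I = UNIV"
  using is_ideal_mult_left[of I 1] by auto

lemma ideal_span_mem: "finite S \<Longrightarrow> s \<in> S \<Longrightarrow> s \<in> ideal_span S"
  unfolding ideal_span_def
proof (intro CollectI exI[of _ "\<lambda>s'. if s' = s then 1 else 0"])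
  assume "finite S" "s \<in> S"
  then show "s = (\<Sum>s'\<in>S. (if s' = s then 1 else 0) * s')"
    by (simp add: if_distrib[of "\<lambda>c. c * _"] sum.delta cong: if_cong)
qed

lemma ideal_span_subset: "is_ideal I \<Longrightarrow> S \<subseteq> I \<Longrightarrow> ideal_span S \<subseteq> I"
  unfolding ideal_span_def by (auto intro!: is_ideal_sum is_ideal_mult_left)

lemma noetherian_Union_chain_mem:
  assumes noeth: "noetherian_ring TYPE('a::comm_ring_1)"
    and C: "C \<in> chains {I::'a set. is_ideal I}" "C \<noteq> {}"
  shows "\<Union>C \<in> C"
proof -
  have ideals: "\<And>X. X \<in> C \<Longrightarrow> is_ideal X" and chain: "subset.chain C C"
    using chainsD[OF C(1)] chainsD2[OF C(1)] by (auto simp: subset_chain_def)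
  have "is_ideal (\<Union>C)" unfolding is_ideal_def
  proof (intro conjI ballI allI)
    show "0 \<in> \<Union>C" using C(2) ideals is_ideal_zero by blast
    show "x + y \<in> \<Union>C" if xy: "x \<in> \<Union>C" "y \<in> \<Union>C" for x y
    proof -
      obtain X Y where XY: "X \<in> C" "Y \<in> C" "x \<in> X" "y \<in> Y" using xy by blast
      then have "x + y \<in> X \<or> x + y \<in> Y"
        using chainsD[OF C(1) XY(1,2)] ideals is_ideal_add by blast
      then show ?thesis using XY by blast
    qed
    show "r * x \<in> \<Union>C" if "x \<in> \<Union>C" for r x
      using that ideals is_ideal_mult_left by blast
  qed
  then obtain T where T: "finite T" "\<Union>C = ideal_span T"
    using noeth unfolding noetherian_ring_def by blast
  moreover have "T \<subseteq> \<Union>C" using T ideal_span_mem by blast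
  ultimately obtain M where "M \<in> C" "T \<subseteq> M"
    using finite_subset_Union_chain[OF T(1) _ C(2) chain] by blast
  moreover have "ideal_span T \<subseteq> M" using calculation ideal_span_subset ideals by blast
  ultimately have "\<Union>C = M" using T(2) by blast
  then show ?thesis using \<open>M \<in> C\<close> by simp
qed

definition ideal_adjoin :: "'a::comm_ring_1 set \<Rightarrow> 'a \<Rightarrow> 'a set" where
  "ideal_adjoin M x = {m + x * r | m r. m \<in> M}"

lemma is_ideal_adjoin:
  assumes "is_ideal M" shows "is_ideal (ideal_adjoin M x)"
  unfolding is_ideal_def ideal_adjoin_def
proof (intro conjI ballI allI)
  have "0 = 0 + x * 0" by simp
  then show "0 \<in> {m + x * r | m r. m \<in> M}" using is_ideal_zero[OF assms] by blast
next
  fix a b assume "a \<in> {m + x * r | m r. m \<in> M}" "b \<in> {m + x * r | m r. m \<in> M}"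
  then obtain m1 r1 m2 r2 where "a = m1 + x * r1" "b = m2 + x * r2" "m1 \<in> M" "m2 \<in> M" by blast
  then have "a + b = (m1 + m2) + x * (r1 + r2)" "m1 + m2 \<in> M"
    using is_ideal_add[OF assms] by (auto simp: algebra_simps)
  then show "a + b \<in> {m + x * r | m r. m \<in> M}" by blast
next
  fix c a assume "a \<in> {m + x * r | m r. m \<in> M}"
  then obtain m r where "a = m + x * r" "m \<in> M" by blast
  moreover have "c * m \<in> M" using is_ideal_mult_left[OF assms \<open>m \<in> M\<close>] .
  ultimately have "c * a = c * m + x * (c * r)" "c * m \<in> M" by (auto simp: algebra_simps)
  then show "c * a \<in> {m + x * r | m r. m \<in> M}" by blast
qed

lemma ideal_adjoin_superset:
  assumes "is_ideal M" shows "M \<subseteq> ideal_adjoin M x" and "x \<in> ideal_adjoin M x"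
proof -
  show "M \<subseteq> ideal_adjoin M x"
  proof
    fix m assume "m \<in> M"
    moreover have "m = m + x * 0" by simp
    ultimately show "m \<in> ideal_adjoin M x" unfolding ideal_adjoin_def by blast
  qed
  have "x = 0 + x * 1" by simp
  then show "x \<in> ideal_adjoin M x" unfolding ideal_adjoin_def using is_ideal_zero[OF assms] by blast
qed

fun prod_set :: "'a::comm_ring_1 set list \<Rightarrow> 'a set" where
  "prod_set [] = {1}"
| "prod_set (Q # Qs) = {q * b | q b. q \<in> Q \<and> b \<in> prod_set Qs}"

lemma prod_set_append:
  "x \<in> prod_set (Qs1 @ Qs2) \<Longrightarrow> \<exists>a b. a \<in> prod_set Qs1 \<and> b \<in> prod_set Qs2 \<and> x = a * b"
proof (induct Qs1 arbitrary: x)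
  case Nil then show ?case by force
next
  case (Cons Q Qs)
  then obtain q c where qc: "q \<in> Q" "c \<in> prod_set (Qs @ Qs2)" "x = q * c" by auto
  then obtain a b where ab: "a \<in> prod_set Qs" "b \<in> prod_set Qs2" "c = a * b" using Cons(1) by blast
  have "q * a \<in> prod_set (Q # Qs)" using qc ab by auto
  moreover have "x = (q * a) * b" using qc ab by (simp add: mult.assoc)
  ultimately show ?case using ab by blast
qed

lemma prod_set_append_subset:
  assumes M: "is_ideal M" and xy: "x * y \<in> M"
    and "prod_set Qs1 \<subseteq> ideal_adjoin M x" "prod_set Qs2 \<subseteq> ideal_adjoin M y"
  shows "prod_set (Qs1 @ Qs2) \<subseteq> M"
proof
  fix w assume "w \<in> prod_set (Qs1 @ Qs2)"
  then obtain a b where ab: "a \<in> prod_set Qs1" "b \<in> prod_set Qs2" "w = a * b"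
    using prod_set_append by blast
  obtain m1 r1 where 1: "a = m1 + x * r1" "m1 \<in> M" using ab assms unfolding ideal_adjoin_def by blast
  obtain m2 r2 where 2: "b = m2 + y * r2" "m2 \<in> M" using ab assms unfolding ideal_adjoin_def by blast
  have "w = m1 * b + m2 * (x * r1) + (x * y) * (r1 * r2)" using ab 1 2 by (simp add: algebra_simps)
  moreover have "m1 * b \<in> M" "m2 * (x * r1) \<in> M" "(x * y) * (r1 * r2) \<in> M"
    using 1 2 xy is_ideal_mult_right[OF M] by auto
  ultimately show "w \<in> M" using is_ideal_add[OF M] by metis
qed

definition nonzero_primes :: "'a::comm_ring_1 set list \<Rightarrow> bool" where
  "nonzero_primes Qs \<longleftrightarrow> (\<forall>Q\<in>set Qs. is_prime_ideal Q \<and> Q \<noteq> {0})"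

lemma noetherian_ideal_contains_prime_product:
  fixes I :: "'a::comm_ring_1 set"
  assumes noeth: "noetherian_ring TYPE('a)" and I: "is_ideal I" "I \<noteq> {0}"
  shows "\<exists>Qs. nonzero_primes Qs \<and> prod_set Qs \<subseteq> I"
proof (rule ccontr)
  assume counterexample: "\<not> ?thesis"
  define S where "S = {J :: 'a set. is_ideal J \<and> J \<noteq> {0} \<and> \<not> (\<exists>Qs. nonzero_primes Qs \<and> prod_set Qs \<subseteq> J)}"
  have "I \<in> S" using I counterexample unfolding S_def by simp
  have "\<forall>C\<in>chains S. \<exists>U\<in>S. \<forall>X\<in>C. X \<subseteq> U"
  proof
    fix C assume C: "C \<in> chains S"
    show "\<exists>U\<in>S. \<forall>X\<in>C. X \<subseteq> U"
    proof (cases "C = {}")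
      case True then show ?thesis using \<open>I \<in> S\<close> by blast
    next
      case False
      have "S \<subseteq> {J. is_ideal J}" unfolding S_def by blast
      then have "C \<in> chains {J. is_ideal J}" using C unfolding chains_def by blast
      then have "\<Union>C \<in> C" using noetherian_Union_chain_mem[OF noeth _ False] by blast
      then show ?thesis using chainsD2[OF C] by (intro bexI[of _ "\<Union>C"]) auto
    qed
  qed
  from Zorn_Lemma2[OF this] obtain M where "M \<in> S" and M_max: "\<And>X. X \<in> S \<Longrightarrow> M \<subseteq> X \<Longrightarrow> X = M"
    by blast
  then have M: "is_ideal M" "M \<noteq> {0}"
    and no_prod: "\<And>Qs. nonzero_primes Qs \<Longrightarrow> \<not> prod_set Qs \<subseteq> M"
    unfolding S_def by auto
  have adjoin: "\<exists>Qs. nonzero_primes Qs \<and> prod_set Qs \<subseteq> ideal_adjoin M z" if "z \<notin> M" for z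
  proof (rule ccontr)
    assume "\<not> ?thesis"
    moreover have "ideal_adjoin M z \<noteq> {0}"
      using ideal_adjoin_superset(1)[OF M(1), of z] M by (auto dest: is_ideal_zero)
    ultimately have "ideal_adjoin M z \<in> S" using is_ideal_adjoin[OF M(1)] unfolding S_def by simp
    then have "ideal_adjoin M z = M" using M_max ideal_adjoin_superset(1)[OF M(1)] by simp
    then show False using ideal_adjoin_superset(2)[OF M(1), of z] that by simp
  qed
  have "M \<noteq> UNIV" using no_prod[of "[]"] by (auto simp: nonzero_primes_def)
  moreover have "\<not> is_prime_ideal M" using no_prod[of "[M]"] M(2) by (auto simp: nonzero_primes_def)
  ultimately obtain x y where xy: "x * y \<in> M" "x \<notin> M" "y \<notin> M"
    using M(1) unfolding is_prime_ideal_def by blast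
  obtain Qs1 Qs2 where "nonzero_primes Qs1" "prod_set Qs1 \<subseteq> ideal_adjoin M x"
    and "nonzero_primes Qs2" "prod_set Qs2 \<subseteq> ideal_adjoin M y"
    using adjoin xy(2,3) by blast
  then show False
    using prod_set_append_subset[OF M(1) xy(1)] no_prod[of "Qs1 @ Qs2"]
    by (auto simp: nonzero_primes_def)
qed

lemma lead_coeff_monom_diff:
  assumes "i < j"
  shows "lead_coeff (monom (1::'a::comm_ring_1) j - monom 1 i) = 1"
proof -
  let ?h = "monom (1::'a) j - monom 1 i"
  have c: "coeff ?h j = 1" using assms by simp
  have "degree ?h \<le> j" by (rule degree_le) (use assms in auto)
  moreover have "j \<le> degree ?h" by (rule le_degree) (use assms in simp)
  ultimately show ?thesis using c assms by simp
qed

lemma eigenvalue_of_integral_matrix_integral: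
  assumes "integrally_closed TYPE('a::idom)" and B: "B \<in> carrier_mat m m"
    and "v \<in> carrier_vec m" "v \<noteq> 0\<^sub>v m" and eigen: "map_mat to_K B *\<^sub>v v = x \<cdot>\<^sub>v v"
  shows "\<exists>d::'a. x = to_K d"
proof -
  have "eigenvector (map_mat to_K B) v x"
    unfolding eigenvector_def using assms by simp
  then have "poly (char_poly (map_mat to_K B)) x = 0"
    using eigenvalue_root_char_poly[of "map_mat to_K B" m] B unfolding eigenvalue_def by auto
  then have "poly (map_poly to_K (char_poly B)) x = 0"
    using to_K.char_poly_hom[OF B] by simp
  moreover have "lead_coeff (char_poly B) = 1" using degree_monic_char_poly[OF B] by simp
  ultimately show ?thesis using assms(1) unfolding integrally_closed_def by blast
qed

lemma poly_common_denominator: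
  fixes f :: "'a::idom fract poly" and Q :: "'a \<Rightarrow> bool"
  assumes quotients: "\<And>i. \<exists>a b. Q b \<and> coeff f i = to_K a / to_K b"
    and Q_one: "Q 1" and Q_mult: "\<And>b c. Q b \<Longrightarrow> Q c \<Longrightarrow> Q (b * c)"
    and Q_nonzero: "\<And>b. Q b \<Longrightarrow> b \<noteq> 0"
  obtains d where "Q d" "\<And>i. \<exists>e. to_K d * coeff f i = to_K e"
proof -
  have "\<forall>i. \<exists>a b. Q b \<and> coeff f i = to_K a / to_K b" using quotients by blast
  from choice[OF this] obtain a where "\<forall>i. \<exists>b. Q b \<and> coeff f i = to_K (a i) / to_K b"
    by blast
  from choice[OF this] obtain b where b: "\<And>i. Q (b i)" "\<And>i. coeff f i = to_K (a i) / to_K (b i)"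
    by blast
  define d where "d = (\<Prod>i\<le>degree f. b i)"
  have Q_prod: "Q (prod b S)" if "finite S" for S
    using that by (induct S rule: finite_induct) (simp_all add: Q_one Q_mult b(1))
  have "\<exists>e. to_K d * coeff f i = to_K e" for i
  proof (cases "i \<le> degree f")
    case True
    then have "d = b i * (\<Prod>j\<in>{..degree f} - {i}. b j)" unfolding d_def by (simp add: prod.remove)
    then have "to_K d * coeff f i = to_K (a i * (\<Prod>j\<in>{..degree f} - {i}. b j))"
      using b(2)[of i] Q_nonzero[OF b(1)] by (simp add: field_simps)
    then show ?thesis by blast
  qed (simp add: coeff_eq_0)
  then show ?thesis using that Q_prod unfolding d_def by blast
qed

lemma poly_lift_to_K:
  fixes f :: "'a::idom fract poly"
  assumes "\<And>i. \<exists>e. coeff f i = to_K e"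
  obtains g where "map_poly to_K g = f"
proof
  define sel :: "'a fract \<Rightarrow> 'a" where "sel w = (SOME e. w = to_K e)" for w
  have sel: "to_K (sel (coeff f i)) = coeff f i" for i
    using someI_ex[OF assms[of i]] unfolding sel_def by simp
  have "sel 0 = 0" using sel[of "degree f + 1"] by (simp add: coeff_eq_0)
  then show "map_poly to_K (map_poly sel f) = f"
    by (intro poly_eqI) (simp add: coeff_map_poly sel)
qed

section \<open>Polynomial evaluation along a central ring homomorphism\<close>

locale central_ring_hom = ring_hom hom for hom :: "'a::comm_ring_1 \<Rightarrow> 'b::ring_1" +
  assumes hom_commutes: "hom x * y = y * hom x"
begin

lemma peval_eq_sum_atMost:
  assumes "degree f \<le> N" shows "peval hom f b = (\<Sum>i\<le>N. hom (coeff f i) * b ^ i)"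
proof -
  have "(\<Sum>i\<le>N. hom (coeff f i) * b ^ i) = (\<Sum>i\<le>degree f. hom (coeff f i) * b ^ i)"
    by (rule sum.mono_neutral_right) (use assms in \<open>auto simp: coeff_eq_0\<close>)
  then show ?thesis unfolding peval_def by simp
qed

lemma peval_0 [simp]: "peval hom 0 b = 0"
  unfolding peval_def by simp

lemma peval_add: "peval hom (f + g) b = peval hom f b + peval hom g b"
proof -
  define N where "N = max (degree f) (degree g)"
  have "degree (f + g) \<le> N" "degree f \<le> N" "degree g \<le> N"
    unfolding N_def using degree_add_le_max[of f g] by auto
  then show ?thesis by (simp add: peval_eq_sum_atMost sum.distrib distrib_right hom_add)
qed

lemma peval_uminus: "peval hom (- f) b = - peval hom f b"
  unfolding peval_def by (simp add: sum_negf hom_uminus)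

lemma peval_diff: "peval hom (f - g) b = peval hom f b - peval hom g b"
  using peval_add[of f "-g"] peval_uminus[of g] by simp

lemma peval_pCons: "peval hom (pCons c p) b = hom c + b * peval hom p b"
proof -
  define N where "N = Suc (degree p)"
  have "degree (pCons c p) \<le> N" unfolding N_def by (rule degree_pCons_le)
  then have "peval hom (pCons c p) b = (\<Sum>i\<le>N. hom (coeff (pCons c p) i) * b ^ i)"
    by (rule peval_eq_sum_atMost)
  also have "\<dots> = hom c + (\<Sum>i<N. hom (coeff p i) * b ^ Suc i)"
    unfolding N_def atMost_Suc lessThan_Suc_atMost[symmetric] sum.lessThan_Suc_shift by simp
  also have "(\<Sum>i<N. hom (coeff p i) * b ^ Suc i) = b * (\<Sum>i<N. hom (coeff p i) * b ^ i)"
    unfolding sum_distrib_left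
  proof (rule sum.cong)
    fix i
    have "hom (coeff p i) * b ^ Suc i = (hom (coeff p i) * b) * b ^ i" by (simp add: mult.assoc)
    then show "hom (coeff p i) * b ^ Suc i = b * (hom (coeff p i) * b ^ i)"
      unfolding hom_commutes[of _ b] by (simp add: mult.assoc)
  qed simp
  also have "(\<Sum>i<N. hom (coeff p i) * b ^ i) = peval hom p b"
    using peval_eq_sum_atMost[of p "degree p"] unfolding N_def lessThan_Suc_atMost by simp
  finally show ?thesis .
qed

lemma peval_1 [simp]: "peval hom 1 b = 1"
  unfolding peval_def by simp

lemma peval_X: "peval hom [:0, 1:] b = b"
  by (simp add: peval_pCons flip: one_pCons)

lemma peval_smult: "peval hom (Polynomial.smult c p) b = hom c * peval hom p b"
  using peval_eq_sum_atMost[OF degree_smult_le, of c p b]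
  by (simp add: peval_def sum_distrib_left mult.assoc hom_mult)

lemma peval_mult: "peval hom (p * q) b = peval hom p b * peval hom q b"
proof (induct p rule: pCons_induct)
  case (pCons c p)
  have "pCons c p * q = Polynomial.smult c q + pCons 0 (p * q)" by simp
  then have "peval hom (pCons c p * q) b = hom c * peval hom q b + b * peval hom (p * q) b"
    by (simp add: peval_add peval_smult peval_pCons)
  then show ?case using pCons(2) by (simp add: peval_pCons distrib_right mult.assoc)
qed simp

lemma peval_power: "peval hom (p ^ n) b = peval hom p b ^ n"
  by (induct n) (simp_all add: peval_mult)

lemma peval_map_poly:
  assumes "h 0 = 0" shows "peval hom (map_poly h g) b = peval (hom \<circ> h) g b"
  unfolding peval_eq_sum_atMost[OF degree_map_poly_le] by (simp add: peval_def coeff_map_poly assms)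

lemma peval_monom_1: "peval hom (monom 1 j) b = b ^ j"
  unfolding monom_altdef by (simp add: peval_smult peval_power peval_X)

end

lemma central_ring_hom_comp_to_K:
  assumes "central_ring_hom \<psi>" shows "central_ring_hom (\<psi> \<circ> to_K)"
proof -
  interpret central_ring_hom \<psi> by fact
  show ?thesis
  proof unfold_locales
    show "(\<psi> \<circ> to_K) x * y = y * (\<psi> \<circ> to_K) x" for x y
      unfolding comp_def by (rule hom_commutes)
  qed (simp_all add: hom_add hom_mult)
qed

section \<open>The localisation at a nonzero prime of a Dedekind domain\<close>

locale dedekind_prime =
  fixes P :: "'d::idom set"
  assumes dedekind: "dedekind_domain TYPE('d)"
    and prime: "is_prime_ideal P" and nonzero: "P \<noteq> {0}"
begin

lemma ideal_P: "is_ideal P"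
  using prime by (simp add: is_prime_ideal_def)

lemma zero_in_P [simp]: "0 \<in> P"
  using ideal_P is_ideal_zero by blast

lemma P_add: "x \<in> P \<Longrightarrow> y \<in> P \<Longrightarrow> x + y \<in> P"
  using ideal_P is_ideal_add by blast

lemma P_diff: "x \<in> P \<Longrightarrow> y \<in> P \<Longrightarrow> x - y \<in> P"
  using ideal_P is_ideal_diff by blast

lemma P_mult_left: "x \<in> P \<Longrightarrow> r * x \<in> P"
  using ideal_P is_ideal_mult_left by blast

lemma P_mult_right: "x \<in> P \<Longrightarrow> x * r \<in> P"
  using ideal_P is_ideal_mult_right by blast

lemma one_notin_P: "1 \<notin> P"
  using ideal_P is_ideal_one_imp_UNIV prime is_prime_ideal_def by blast

lemma P_prime: "x * y \<in> P \<Longrightarrow> x \<in> P \<or> y \<in> P"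
  using prime is_prime_ideal_def by blast

lemma notin_P_nonzero: "s \<notin> P \<Longrightarrow> s \<noteq> 0"
  by auto

lemma notin_P_mult: "s \<notin> P \<Longrightarrow> t \<notin> P \<Longrightarrow> s * t \<notin> P"
  using P_prime by blast

lemma notin_P_prod: "finite S \<Longrightarrow> (\<And>i. i \<in> S \<Longrightarrow> f i \<notin> P) \<Longrightarrow> prod f S \<notin> P"
  by (induct S rule: finite_induct) (auto simp: one_notin_P notin_P_mult)

lemma noetherian: "noetherian_ring TYPE('d)"
  using dedekind unfolding dedekind_domain_def by blast

lemma integrally_closed: "integrally_closed TYPE('d)"
  using dedekind unfolding dedekind_domain_def by blast

lemma maximal_P: "is_maximal_ideal P"
  using dedekind prime nonzero unfolding dedekind_domain_def by blast

lemma unit_mod_P: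
  assumes "s \<notin> P" obtains t p where "p \<in> P" "1 = p + s * t"
proof -
  have "ideal_adjoin P s = UNIV"
    using maximal_P is_ideal_adjoin[OF ideal_P] ideal_adjoin_superset[OF ideal_P] assms
    unfolding is_maximal_ideal_def by blast
  then show ?thesis using that unfolding ideal_adjoin_def by blast
qed

definition DP :: "'d fract set" where
  "DP = loc_D P"

definition PDP :: "'d fract set" where
  "PDP = {to_K x / to_K s | x s. x \<in> P \<and> s \<notin> P}"

lemma DP_iff: "z \<in> DP \<longleftrightarrow> (\<exists>x s. s \<notin> P \<and> z = to_K x / to_K s)"
proof
  assume "z \<in> DP"
  then obtain x s where "s \<notin> P" "z = Fract x s" unfolding DP_def loc_D_def by blast
  then show "\<exists>x s. s \<notin> P \<and> z = to_K x / to_K s"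
    using Fract_eq_to_K_divide notin_P_nonzero by blast
next
  assume "\<exists>x s. s \<notin> P \<and> z = to_K x / to_K s"
  then obtain x s where "s \<notin> P" "z = to_K x / to_K s" by blast
  moreover from this have "z = Fract x s"
    using Fract_eq_to_K_divide[OF notin_P_nonzero[OF \<open>s \<notin> P\<close>]] by simp
  ultimately show "z \<in> DP" unfolding DP_def loc_D_def by blast
qed

lemma DP_intro: "s \<notin> P \<Longrightarrow> to_K x / to_K s \<in> DP"
  unfolding DP_iff by blast

lemma DP_to_K [simp]: "to_K x \<in> DP"
  using DP_intro[OF one_notin_P, of x] by simp

lemma DP_0 [simp]: "0 \<in> DP" and DP_1 [simp]: "1 \<in> DP"
  using DP_to_K[of 0] DP_to_K[of 1] by simp_all

lemma DP_inverse_to_K: "s \<notin> P \<Longrightarrow> inverse (to_K s) \<in> DP"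
  using DP_intro[of s 1] by (simp add: field_simps)

lemma DP_add: assumes "z \<in> DP" "w \<in> DP" shows "z + w \<in> DP"
proof -
  obtain x s y t where "s \<notin> P" "t \<notin> P" "z = to_K x / to_K s" "w = to_K y / to_K t"
    using assms DP_iff by metis
  then have "z + w = to_K (x * t + y * s) / to_K (s * t)" "s * t \<notin> P"
    using notin_P_mult notin_P_nonzero by (auto simp: field_simps)
  then show ?thesis using DP_intro by metis
qed

lemma DP_mult: assumes "z \<in> DP" "w \<in> DP" shows "z * w \<in> DP"
proof -
  obtain x s y t where "s \<notin> P" "t \<notin> P" "z = to_K x / to_K s" "w = to_K y / to_K t"
    using assms DP_iff by metis
  then have "z * w = to_K (x * y) / to_K (s * t)" "s * t \<notin> P"
    using notin_P_mult by (auto simp: times_divide_times_eq)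
  then show ?thesis using DP_intro by metis
qed

lemma PDP_subset_DP: "PDP \<subseteq> DP"
  unfolding PDP_def using DP_intro by blast

lemma PDP_intro: "x \<in> P \<Longrightarrow> s \<notin> P \<Longrightarrow> to_K x / to_K s \<in> PDP"
  unfolding PDP_def by blast

lemma PDP_to_K_iff: "to_K d \<in> PDP \<longleftrightarrow> d \<in> P"
proof
  assume "to_K d \<in> PDP"
  then obtain x s where "x \<in> P" "s \<notin> P" "to_K d = to_K x / to_K s" unfolding PDP_def by auto
  then have "to_K d * to_K s = to_K x" using notin_P_nonzero by (simp add: field_simps)
  then have "d * s = x" by (metis to_K.hom_mult to_K.eq_iff)
  then have "d * s \<in> P" using \<open>x \<in> P\<close> by simp
  then show "d \<in> P" using P_prime \<open>s \<notin> P\<close> by blast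
qed (use PDP_intro[OF _ one_notin_P] in simp)

lemma one_notin_PDP: "1 \<notin> PDP"
  using PDP_to_K_iff[of 1] one_notin_P by simp

lemma PDP_add: assumes "z \<in> PDP" "w \<in> PDP" shows "z + w \<in> PDP"
proof -
  obtain x s y t where "x \<in> P" "y \<in> P" "s \<notin> P" "t \<notin> P"
      "z = to_K x / to_K s" "w = to_K y / to_K t"
    using assms unfolding PDP_def by blast
  then have "z + w = to_K (x * t + y * s) / to_K (s * t)" "s * t \<notin> P" "x * t + y * s \<in> P"
    using notin_P_mult notin_P_nonzero by (auto simp: field_simps intro!: P_add P_mult_right P_mult_left)
  then show ?thesis using PDP_intro by metis
qed

lemma PDP_mult: assumes "z \<in> DP" "w \<in> PDP" shows "z * w \<in> PDP"
proof -
  obtain x s y t where "y \<in> P" "s \<notin> P" "t \<notin> P" "z = to_K x / to_K s" "w = to_K y / to_K t"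
    using assms unfolding PDP_def DP_iff by blast
  then have "z * w = to_K (x * y) / to_K (s * t)" "s * t \<notin> P" "x * y \<in> P"
    using notin_P_mult by (auto simp: times_divide_times_eq P_mult_left)
  then show ?thesis using PDP_intro by metis
qed

lemma DP_inverse_if_notin_PDP:
  assumes "z \<in> DP" "z \<notin> PDP" shows "inverse z \<in> DP"
proof -
  obtain x s where xs: "s \<notin> P" "z = to_K x / to_K s" using assms DP_iff by auto
  then have "x \<notin> P" using assms unfolding PDP_def by auto
  then show "inverse z \<in> DP" using xs DP_intro[of x s] by simp
qed

definition DP_ideal :: "'d fract set \<Rightarrow> bool" where
  "DP_ideal L \<longleftrightarrow> L \<subseteq> DP \<and> 0 \<in> L \<and> (\<forall>a\<in>L. \<forall>b\<in>L. a + b \<in> L) \<and> (\<forall>z\<in>DP. \<forall>a\<in>L. z * a \<in> L)"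

lemma DP_ideal_PDP: "DP_ideal PDP"
  unfolding DP_ideal_def using PDP_subset_DP PDP_add PDP_mult PDP_intro[OF zero_in_P one_notin_P]
  by simp

lemma DP_ideal_multiples:
  assumes "c \<in> DP" "c \<noteq> 0" shows "DP_ideal {z. z / c \<in> DP}"
  unfolding DP_ideal_def
proof (intro conjI ballI subsetI)
  show "z \<in> DP" if "z \<in> {z. z / c \<in> DP}" for z
  proof -
    have "c * (z / c) \<in> DP" using DP_mult[OF assms(1)] that by blast
    then show ?thesis using assms(2) by simp
  qed
  show "a + b \<in> {z. z / c \<in> DP}" if "a \<in> {z. z / c \<in> DP}" "b \<in> {z. z / c \<in> DP}" for a b
    using that DP_add by (simp add: add_divide_distrib)
  show "z * a \<in> {z. z / c \<in> DP}" if "z \<in> DP" "a \<in> {z. z / c \<in> DP}" for z a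
  proof -
    have "z * (a / c) \<in> DP" using that DP_mult by blast
    then show ?thesis by simp
  qed
qed simp

definition saturated :: "'d set \<Rightarrow> bool" where
  "saturated J \<longleftrightarrow> (\<forall>s y. s \<notin> P \<longrightarrow> s * y \<in> J \<longrightarrow> y \<in> J)"

lemma contraction_ideal:
  assumes "DP_ideal L" shows "is_ideal {d. to_K d \<in> L}" and "saturated {d. to_K d \<in> L}"
proof -
  show "is_ideal {d. to_K d \<in> L}"
    using assms unfolding DP_ideal_def is_ideal_def by simp
  show "saturated {d. to_K d \<in> L}" unfolding saturated_def
  proof (intro allI impI)
    fix s y assume "s \<notin> P" "s * y \<in> {d. to_K d \<in> L}"
    then have "inverse (to_K s) * (to_K s * to_K y) \<in> L"
      using assms DP_inverse_to_K unfolding DP_ideal_def by simp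
    then show "y \<in> {d. to_K d \<in> L}" using notin_P_nonzero[OF \<open>s \<notin> P\<close>] by (simp flip: mult.assoc)
  qed
qed

lemma contraction_subset_P: "L \<subseteq> PDP \<Longrightarrow> {d. to_K d \<in> L} \<subseteq> P"
  using PDP_to_K_iff by blast

lemma DP_ideal_finite_generators:
  assumes L: "DP_ideal L"
  obtains m :: nat and l :: "nat \<Rightarrow> 'd fract" where "\<And>k. k < m \<Longrightarrow> l k \<in> L"
    and "\<And>y. y \<in> L \<Longrightarrow> \<exists>t c. t \<notin> P \<and> to_K t * y = (\<Sum>k<m. to_K (c k) * l k)"
proof -
  obtain S where S: "finite S" "{d. to_K d \<in> L} = ideal_span S"
    using noetherian contraction_ideal(1)[OF L] unfolding noetherian_ring_def by blast
  obtain xs where xs: "distinct xs" "set xs = S" using finite_distinct_list[OF S(1)] by blast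
  define m where "m = length xs"
  define l where "l k = to_K (xs ! k)" for k
  have bij: "bij_betw ((!) xs) {..<m} S" using bij_betw_nth[OF xs(1)] xs m_def by simp
  have "l k \<in> L" if "k < m" for k
    using that xs ideal_span_mem[OF S(1)] S(2) unfolding l_def m_def by force
  moreover have "\<exists>t c. t \<notin> P \<and> to_K t * y = (\<Sum>k<m. to_K (c k) * l k)" if "y \<in> L" for y
  proof -
    have "y \<in> DP" using that L unfolding DP_ideal_def by blast
    then obtain a t where at: "t \<notin> P" "y = to_K a / to_K t" unfolding DP_iff by blast
    then have "to_K a = to_K t * y" using notin_P_nonzero by simp
    then have "a \<in> ideal_span S"
    proof -
      have "to_K a \<in> L" using L that \<open>to_K a = to_K t * y\<close> unfolding DP_ideal_def by simp
      then show ?thesis using S(2) by blast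
    qed
    then obtain c where "a = (\<Sum>s\<in>S. c s * s)" unfolding ideal_span_def by blast
    also have "\<dots> = (\<Sum>k<m. c (xs ! k) * xs ! k)"
      using sum.reindex_bij_betw[OF bij, of "\<lambda>s. c s * s"] by simp
    finally have "to_K t * y = (\<Sum>k<m. to_K (c (xs ! k)) * l k)"
      using \<open>to_K a = to_K t * y\<close> by (simp add: to_K.hom_sum l_def)
    then show ?thesis using at(1) by (intro exI[of _ t] exI[of _ "\<lambda>k. c (xs ! k)"]) simp
  qed
  ultimately show ?thesis using that by blast
qed

text \<open>The determinant trick: the relations say that \<open>T x\<close>, with \<open>T\<close> the product of the
  denominators \<open>t\<^sub>j\<close>, is an eigenvalue of a matrix over \<open>D\<close>, hence integral over \<open>D\<close>.\<close>
lemma in_DP_if_linear_relations: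
  fixes l :: "nat \<Rightarrow> 'd fract"
  assumes nonzero: "\<exists>k<m. l k \<noteq> 0"
    and rel: "\<And>j. j < m \<Longrightarrow> t j \<notin> P" "\<And>j. j < m \<Longrightarrow> to_K (t j) * (x * l j) = (\<Sum>k<m. to_K (c j k) * l k)"
  shows "x \<in> DP"
proof -
  define T where "T = (\<Prod>j<m. t j)"
  define T' where "T' j = (\<Prod>i\<in>{..<m} - {j}. t i)" for j
  have T: "T \<notin> P" unfolding T_def by (rule notin_P_prod) (auto simp: rel(1))
  have T_split: "T = t j * T' j" if "j < m" for j
    unfolding T_def T'_def using that by (simp add: prod.remove)
  define B where "B = mat m m (\<lambda>(j, k). T' j * c j k)"
  define v where "v = vec m l"
  have B: "B \<in> carrier_mat m m" unfolding B_def by simp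
  have eigen: "map_mat to_K B *\<^sub>v v = (to_K T * x) \<cdot>\<^sub>v v"
  proof (rule eq_vecI)
    fix j assume "j < dim_vec ((to_K T * x) \<cdot>\<^sub>v v)"
    then have j: "j < m" by (simp add: v_def)
    have "(map_mat to_K B *\<^sub>v v) $ j = to_K (T' j) * (\<Sum>k<m. to_K (c j k) * l k)"
      using j by (simp add: B_def v_def scalar_prod_def lessThan_atLeast0 sum_distrib_left mult.assoc)
    also have "\<dots> = to_K T * x * l j" using rel(2)[OF j] T_split[OF j] by (simp add: ac_simps)
    finally show "(map_mat to_K B *\<^sub>v v) $ j = ((to_K T * x) \<cdot>\<^sub>v v) $ j" using j by (simp add: v_def)
  qed (simp add: B_def v_def)
  have "v \<noteq> 0\<^sub>v m"
  proof
    assume "v = 0\<^sub>v m"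
    then have "l k = 0" if "k < m" for k
    proof -
      have "v $ k = 0" using \<open>v = 0\<^sub>v m\<close> that by simp
      then show ?thesis using that by (simp add: v_def)
    qed
    then show False using nonzero by blast
  qed
  then have "\<exists>d. to_K T * x = to_K d"
    by (intro eigenvalue_of_integral_matrix_integral[OF integrally_closed B _ _ eigen]) (simp add: v_def)
  then obtain d where "to_K T * x = to_K d" by blast
  then have "x = to_K d / to_K T" using notin_P_nonzero[OF T] by (simp add: field_simps)
  then show ?thesis using DP_intro[OF T] by simp
qed

lemma DP_ideal_stabilizer_in_DP:
  assumes L: "DP_ideal L" and y0: "y0 \<in> L" "y0 \<noteq> 0" and stable: "\<And>a. a \<in> L \<Longrightarrow> x * a \<in> L"
  shows "x \<in> DP"
proof -
  obtain m :: nat and l where gen: "\<And>k. k < m \<Longrightarrow> l k \<in> L"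
    "\<And>y. y \<in> L \<Longrightarrow> \<exists>t c. t \<notin> P \<and> to_K t * y = (\<Sum>k<m. to_K (c k) * l k)"
    using DP_ideal_finite_generators[OF L] by blast
  have "\<forall>j. \<exists>t c. j < m \<longrightarrow> t \<notin> P \<and> to_K t * (x * l j) = (\<Sum>k<m. to_K (c k) * l k)"
  proof
    fix j
    show "\<exists>t c. j < m \<longrightarrow> t \<notin> P \<and> to_K t * (x * l j) = (\<Sum>k<m. to_K (c k) * l k)"
    proof (cases "j < m")
      case True
      then show ?thesis using gen(2)[OF stable[OF gen(1)[OF True]]] by blast
    qed simp
  qed
  from choice[OF this] obtain t
    where "\<forall>j. \<exists>c. j < m \<longrightarrow> t j \<notin> P \<and> to_K (t j) * (x * l j) = (\<Sum>k<m. to_K (c k) * l k)"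
    by blast
  from choice[OF this] obtain c where rel: "\<And>j. j < m \<Longrightarrow> t j \<notin> P"
    "\<And>j. j < m \<Longrightarrow> to_K (t j) * (x * l j) = (\<Sum>k<m. to_K (c j k) * l k)"
    by blast
  obtain t' c' where t': "t' \<notin> P" "to_K t' * y0 = (\<Sum>k<m. to_K (c' k) * l k)"
    using gen(2)[OF y0(1)] by blast
  have "\<exists>k<m. l k \<noteq> 0"
  proof (rule ccontr)
    assume "\<not> ?thesis"
    then have "to_K t' * y0 = 0" using t'(2) by simp
    then show False using y0(2) notin_P_nonzero[OF t'(1)] by simp
  qed
  then show ?thesis using in_DP_if_linear_relations rel by blast
qed

lemma prod_set_filter_P:
  assumes "nonzero_primes Qs" "saturated J" "prod_set Qs \<subseteq> J"
  shows "prod_set (filter (\<lambda>Q. P = Q) Qs) \<subseteq> J"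
  using assms
proof (induct Qs arbitrary: J)
  case (Cons Q Qs)
  have Qs: "nonzero_primes Qs" using Cons(2) by (simp add: nonzero_primes_def)
  show ?case
  proof (cases "P = Q")
    case False
    have "is_maximal_ideal Q" using Cons(2) dedekind unfolding nonzero_primes_def dedekind_domain_def by simp
    then have "\<not> Q \<subseteq> P" using False ideal_P one_notin_P unfolding is_maximal_ideal_def by blast
    then obtain s where s: "s \<in> Q" "s \<notin> P" by blast
    have "prod_set Qs \<subseteq> J"
    proof
      fix b assume "b \<in> prod_set Qs"
      then have "s * b \<in> J" using Cons(4) s by auto
      then show "b \<in> J" using Cons(3) s unfolding saturated_def by blast
    qed
    then show ?thesis using Cons(1)[OF Qs Cons(3)] False by simp
  next
    case True
    have "prod_set (filter (\<lambda>Q. P = Q) Qs) \<subseteq> {y. q * y \<in> J}" if "q \<in> P" for q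
    proof (rule Cons(1)[OF Qs])
      show "saturated {y. q * y \<in> J}" using Cons(3) unfolding saturated_def
        by (metis mem_Collect_eq mult.left_commute)
      show "prod_set Qs \<subseteq> {y. q * y \<in> J}" using Cons(4) that True by auto
    qed
    then show ?thesis using True by auto
  qed
qed simp

text \<open>An element of \<open>K \<setminus> D\<^sub>P\<close> multiplying \<open>P\<close> into \<open>D\<^sub>P\<close>: with \<open>b \<in> P\<close> nonzero and
  \<open>P\<^sup>k\<^sup>+\<^sup>1 \<subseteq> (b) \<subseteq> P\<close> locally (\<open>k\<close> minimal), take \<open>a/b\<close> for some \<open>a \<in> P\<^sup>k\<close> outside \<open>(b)\<close>.\<close>
lemma exists_P_inverse:
  obtains x where "x \<notin> DP" "\<And>p. p \<in> P \<Longrightarrow> x * to_K p \<in> DP"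
proof -
  obtain b where b: "b \<in> P" "b \<noteq> 0" using nonzero zero_in_P by blast
  define L where "L = {z. z / to_K b \<in> DP}"
  define I where "I = {d. to_K d \<in> L}"
  have L: "DP_ideal L" unfolding L_def by (rule DP_ideal_multiples) (use b in simp_all)
  have "L \<subseteq> PDP"
  proof
    fix z assume "z \<in> L"
    then have "(z / to_K b) * to_K b \<in> PDP"
      using PDP_mult[of "z / to_K b" "to_K b"] PDP_to_K_iff b(1) unfolding L_def by blast
    then show "z \<in> PDP" using b by simp
  qed
  then have I_P: "I \<subseteq> P" unfolding I_def by (rule contraction_subset_P)
  have "b \<in> I" using b unfolding I_def L_def by simp
  then have "I \<noteq> {0}" using b by blast
  then obtain Qs where "nonzero_primes Qs" "prod_set Qs \<subseteq> I"
    using noetherian_ideal_contains_prime_product[OF noetherian contraction_ideal(1)[OF L]]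
    unfolding I_def by blast
  then have "prod_set (replicate (length (filter (\<lambda>Q. P = Q) Qs)) P) \<subseteq> I"
    using prod_set_filter_P contraction_ideal(2)[OF L] unfolding I_def replicate_length_filter
    by blast
  moreover have "\<not> prod_set (replicate 0 P) \<subseteq> I" using I_P one_notin_P by auto
  ultimately obtain k where k: "\<not> prod_set (replicate k P) \<subseteq> I" "prod_set (replicate (Suc k) P) \<subseteq> I"
    using exists_least_lemma[of "\<lambda>k. prod_set (replicate k P) \<subseteq> I"] by blast
  then obtain a where a: "a \<in> prod_set (replicate k P)" "a \<notin> I" by blast
  have "p * a \<in> I" if "p \<in> P" for p using k(2) a(1) that by auto
  then have "to_K a / to_K b * to_K p \<in> DP" if "p \<in> P" for p
    using that unfolding I_def L_def by (simp add: mult.commute[of "to_K a"])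
  moreover have "to_K a / to_K b \<notin> DP" using a(2) unfolding I_def L_def by simp
  ultimately show ?thesis using that by blast
qed

text \<open>If \<open>x \<notin> D\<^sub>P\<close> and \<open>x P \<subseteq> D\<^sub>P\<close>, the determinant trick forbids \<open>x P D\<^sub>P \<subseteq> P D\<^sub>P\<close>;
  so \<open>x p\<^sub>0\<close> is a unit of \<open>D\<^sub>P\<close> for some \<open>p\<^sub>0 \<in> P\<close>, and \<open>p\<^sub>0\<close> generates \<open>P D\<^sub>P\<close>.\<close>
lemma exists_uniformizer:
  obtains \<pi> where "\<pi> \<in> P" "\<pi> \<noteq> 0" "\<And>p. p \<in> P \<Longrightarrow> to_K p / to_K \<pi> \<in> DP"
proof -
  obtain x where x: "x \<notin> DP" "\<And>p. p \<in> P \<Longrightarrow> x * to_K p \<in> DP"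
    using exists_P_inverse by blast
  have "\<exists>p0\<in>P. x * to_K p0 \<notin> PDP"
  proof (rule ccontr)
    assume "\<not> ?thesis"
    then have x_PDP: "x * to_K p \<in> PDP" if "p \<in> P" for p using that by blast
    obtain b where b: "b \<in> P" "b \<noteq> 0" using nonzero zero_in_P by blast
    have "x \<in> DP"
    proof (rule DP_ideal_stabilizer_in_DP[OF DP_ideal_PDP])
      show "to_K b \<in> PDP" "to_K b \<noteq> 0" using b PDP_to_K_iff by simp_all
      show "x * a \<in> PDP" if a: "a \<in> PDP" for a
      proof -
        obtain p s where ps: "p \<in> P" "s \<notin> P" "a = to_K p / to_K s"
          using a unfolding PDP_def by blast
        then have eq: "x * a = inverse (to_K s) * (x * to_K p)" by (simp add: divide_inverse ac_simps)
        show ?thesis unfolding eq using PDP_mult[OF DP_inverse_to_K[OF ps(2)] x_PDP[OF ps(1)]] .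
      qed
    qed
    then show False using x(1) by blast
  qed
  then obtain p0 where p0: "p0 \<in> P" "x * to_K p0 \<notin> PDP" by blast
  define u where "u = x * to_K p0"
  have u: "inverse u \<in> DP" "u \<noteq> 0"
    using DP_inverse_if_notin_PDP[of u] x(2)[OF p0(1)] p0(2) PDP_intro[OF zero_in_P one_notin_P]
    unfolding u_def by auto
  have "to_K p / to_K p0 = (x * to_K p) * inverse u" for p
    using u(2) unfolding u_def by (simp add: field_simps)
  then have "to_K p / to_K p0 \<in> DP" if "p \<in> P" for p
    using DP_mult[OF x(2)[OF that] u(1)] by simp
  moreover have "p0 \<noteq> 0" using u(2) unfolding u_def by auto
  ultimately show ?thesis using that p0(1) by blast
qed

definition residue :: "'d \<Rightarrow> 'd set" where
  "residue x = {y. x - y \<in> P}"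

lemma quot_ring_eq_range_residue: "quot_ring P = range residue"
  unfolding quot_ring_def residue_def by simp

lemma residue_eq_iff: "residue t = residue t' \<longleftrightarrow> t - t' \<in> P"
proof
  assume "residue t = residue t'"
  moreover have "t' \<in> residue t'" unfolding residue_def by simp
  ultimately show "t - t' \<in> P" unfolding residue_def by blast
next
  assume h: "t - t' \<in> P"
  have "t - y \<in> P \<longleftrightarrow> t' - y \<in> P" for y
  proof
    assume "t - y \<in> P"
    then have "(t - y) - (t - t') \<in> P" using P_diff h by blast
    then show "t' - y \<in> P" by (simp add: algebra_simps)
  next
    assume "t' - y \<in> P"
    then have "(t' - y) + (t - t') \<in> P" using P_add h by blast
    then show "t - y \<in> P" by (simp add: algebra_simps)
  qed
  then show "residue t = residue t'" unfolding residue_def by blast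
qed

definition incongruent :: "'d set \<Rightarrow> bool" where
  "incongruent T \<longleftrightarrow> (\<forall>t\<in>T. \<forall>t'\<in>T. t \<noteq> t' \<longrightarrow> t - t' \<notin> P)"

lemma infinite_quot_ring_incongruent_set:
  assumes "infinite (quot_ring P)"
  obtains T where "finite T" "card T = n" "incongruent T"
proof -
  obtain B where B: "finite B" "card B = n" "B \<subseteq> quot_ring P"
    using infinite_arbitrarily_large[OF assms] by blast
  note B(3)[unfolded quot_ring_eq_range_residue]
  define T where "T = inv_into UNIV residue ` B"
  have "inj_on (inv_into UNIV residue) B" using inj_on_inv_into[OF \<open>B \<subseteq> range residue\<close>] .
  then have "card T = n" using B(2) card_image unfolding T_def by blast
  moreover have "incongruent T" unfolding incongruent_def T_def
  proof (intro ballI impI)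
    fix t t' assume "t \<in> inv_into UNIV residue ` B" "t' \<in> inv_into UNIV residue ` B" "t \<noteq> t'"
    then obtain X Y where XY: "X \<in> B" "Y \<in> B" "t = inv_into UNIV residue X" "t' = inv_into UNIV residue Y" by blast
    then have "residue t = X" "residue t' = Y"
      using \<open>B \<subseteq> range residue\<close> f_inv_into_f[of _ residue UNIV] by blast+
    show "t - t' \<notin> P"
    proof
      assume "t - t' \<in> P"
      then have "X = Y" using \<open>residue t = X\<close> \<open>residue t' = Y\<close> residue_eq_iff by blast
      then show False using XY \<open>t \<noteq> t'\<close> by simp
    qed
  qed
  ultimately show ?thesis using that B(1) T_def by blast
qed

lemma finite_quot_ring_representatives:
  assumes "finite (quot_ring P)"
  obtains R where "finite R" "R \<noteq> {}" "\<And>d. \<exists>r\<in>R. d - r \<in> P"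
proof
  define R where "R = inv_into UNIV residue ` range residue"
  show "finite R" "R \<noteq> {}" using assms quot_ring_eq_range_residue unfolding R_def by auto
  show "\<exists>r\<in>R. d - r \<in> P" for d
  proof
    show "inv_into UNIV residue (residue d) \<in> R" unfolding R_def by simp
    have "residue (inv_into UNIV residue (residue d)) = residue d" by (simp add: f_inv_into_f)
    then show "d - inv_into UNIV residue (residue d) \<in> P" using residue_eq_iff by blast
  qed
qed

lemma coeff_in_P_if_roots_mod_P:
  assumes "finite T" "incongruent T" "\<And>t. t \<in> T \<Longrightarrow> poly g t \<in> P" "degree g < card T"
  shows "coeff g i \<in> P"
  using assms
proof (induct T arbitrary: g i rule: finite_induct)
  case (insert t T)
  have gt: "poly g t \<in> P" using insert by simp
  show ?case
  proof (cases "degree g = 0")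
    case True
    then show ?thesis using gt by (cases i) (auto simp: coeff_eq_0 poly_altdef)
  next
    case False
    define q where "q = synthetic_div g t"
    have gq: "g = Polynomial.smult (- t) q + pCons 0 q + [:poly g t:]"
      using synthetic_div_correct'[of t g] unfolding q_def by simp
    have "poly q t' \<in> P" if t': "t' \<in> T" for t'
    proof -
      have "(t' - t) * poly q t' = poly g t' - poly g t"
        using arg_cong[OF gq, of "\<lambda>p. poly p t'"] by (simp add: algebra_simps)
      then have "(t' - t) * poly q t' \<in> P" using insert(5) t' gt P_diff by simp
      moreover have "t' - t \<notin> P" using insert(2,4) t' unfolding incongruent_def by (metis insertCI)
      ultimately show ?thesis using P_prime by blast
    qed
    moreover have "degree q < card T"
      using insert False degree_synthetic_div[of g t] unfolding q_def by simp
    moreover have "incongruent T" using insert(4) unfolding incongruent_def by blast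
    ultimately have cq: "coeff q j \<in> P" for j using insert(3) by blast
    have "coeff g i = - t * coeff q i + coeff (pCons 0 q) i + coeff [:poly g t:] i"
      by (subst gq) simp
    moreover have "coeff (pCons 0 q) i \<in> P" by (cases i) (auto simp: cq)
    moreover have "coeff [:poly g t:] i \<in> P" by (cases i) (auto simp: gt)
    moreover have "t * coeff q i \<in> P" using P_mult_left[OF cq] .
    ultimately show ?thesis by (simp add: P_add P_diff)
  qed
qed simp

definition uniformizer :: 'd where
  "uniformizer = (SOME \<pi>. \<pi> \<in> P \<and> \<pi> \<noteq> 0 \<and> (\<forall>p\<in>P. to_K p / to_K \<pi> \<in> DP))"

lemma uniformizer_spec: "uniformizer \<in> P" "uniformizer \<noteq> 0" "\<And>p. p \<in> P \<Longrightarrow> to_K p / to_K uniformizer \<in> DP"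
proof -
  have "\<exists>\<pi>. \<pi> \<in> P \<and> \<pi> \<noteq> 0 \<and> (\<forall>p\<in>P. to_K p / to_K \<pi> \<in> DP)"
    using exists_uniformizer by metis
  from someI_ex[OF this] show "uniformizer \<in> P" "uniformizer \<noteq> 0"
    "\<And>p. p \<in> P \<Longrightarrow> to_K p / to_K uniformizer \<in> DP"
    unfolding uniformizer_def[symmetric] by blast+
qed

lemma inverse_uniformizer_notin_DP: "inverse (to_K uniformizer) \<notin> DP"
proof
  assume "inverse (to_K uniformizer) \<in> DP"
  then have "inverse (to_K uniformizer) * to_K uniformizer \<in> PDP"
    using PDP_mult PDP_to_K_iff uniformizer_spec(1) by blast
  then show False using uniformizer_spec(2) one_notin_PDP by simp
qed

lemma PDP_iff_uniformizer_multiple: "z \<in> PDP \<longleftrightarrow> (\<exists>w\<in>DP. z = to_K uniformizer * w)"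
proof
  assume "z \<in> PDP"
  then obtain p s where ps: "p \<in> P" "s \<notin> P" "z = to_K p / to_K s" unfolding PDP_def by blast
  have "z = to_K uniformizer * ((to_K p / to_K uniformizer) * inverse (to_K s))"
    using ps uniformizer_spec(2) by (simp add: field_simps)
  moreover have "(to_K p / to_K uniformizer) * inverse (to_K s) \<in> DP"
    using DP_mult uniformizer_spec(3) ps DP_inverse_to_K by blast
  ultimately show "\<exists>w\<in>DP. z = to_K uniformizer * w" by blast
next
  assume "\<exists>w\<in>DP. z = to_K uniformizer * w"
  then show "z \<in> PDP"
    using PDP_mult[OF _ iffD2[OF PDP_to_K_iff uniformizer_spec(1)]] by (auto simp: mult.commute)
qed

lemma DP_common_denominator:
  assumes "\<And>i. coeff h i \<in> DP"
  obtains S where "S \<notin> P" "\<And>i. \<exists>e. to_K S * coeff h i = to_K e"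
proof (rule poly_common_denominator[where f = h and Q = "\<lambda>b. b \<notin> P"])
  show "\<exists>a b. b \<notin> P \<and> coeff h i = to_K a / to_K b" for i using assms[of i] unfolding DP_iff by blast
qed (use that one_notin_P notin_P_mult in auto)

text \<open>The multipliers that clear
  the denominators form an ideal \<open>J\<close> of \<open>D\<^sub>P\<close> inside \<open>P D\<^sub>P\<close>; if they all pushed the
  coefficients into \<open>P D\<^sub>P\<close>, then \<open>\<pi>\<^sup>-\<^sup>1 J \<subseteq> J\<close> and \<open>\<pi>\<^sup>-\<^sup>1\<close> would lie in \<open>D\<^sub>P\<close>.\<close>
lemma exists_primitive_multiple:
  fixes f :: "'d fract poly"
  assumes i0: "coeff f i0 \<notin> DP"
  obtains c where "c \<in> PDP" "\<And>i. c * coeff f i \<in> DP" "\<exists>i. c * coeff f i \<notin> PDP"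
proof -
  define J where "J = {c. c \<in> DP \<and> (\<forall>i. c * coeff f i \<in> DP)}"
  have J: "DP_ideal J" unfolding DP_ideal_def
  proof (intro conjI ballI)
    show "a + b \<in> J" if "a \<in> J" "b \<in> J" for a b
      using that DP_add unfolding J_def by (simp add: distrib_right)
    show "z * a \<in> J" if "z \<in> DP" "a \<in> J" for z a
      using that DP_mult unfolding J_def by (simp add: mult.assoc)
  qed (auto simp: J_def)
  have J_PDP: "c \<in> PDP" if "c \<in> J" for c
  proof (rule ccontr)
    assume "c \<notin> PDP"
    then have "inverse c \<in> DP" "c \<noteq> 0"
      using that DP_inverse_if_notin_PDP PDP_intro[OF zero_in_P one_notin_P] unfolding J_def by auto
    then have "inverse c * (c * coeff f i0) \<in> DP" using that DP_mult unfolding J_def by blast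
    then show False using i0 \<open>c \<noteq> 0\<close> by (simp add: mult.assoc[symmetric])
  qed
  obtain d where d: "d \<noteq> 0" "\<And>i. \<exists>e. to_K d * coeff f i = to_K e"
    by (rule poly_common_denominator[where f = f and Q = "\<lambda>b. b \<noteq> 0"]) (use fract_as_quotient in auto)
  have "to_K d * coeff f i \<in> DP" for i using d(2)[of i] by auto
  then have "to_K d \<in> J" unfolding J_def by simp
  have "\<exists>c\<in>J. \<exists>i. c * coeff f i \<notin> PDP"
  proof (rule ccontr)
    assume "\<not> ?thesis"
    then have all_PDP: "\<And>c i. c \<in> J \<Longrightarrow> c * coeff f i \<in> PDP" by blast
    have divide_uniformizer: "inverse (to_K uniformizer) * w \<in> DP" if "w \<in> PDP" for w
      using that uniformizer_spec(2) unfolding PDP_iff_uniformizer_multiple by (auto simp: mult.assoc[symmetric])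
    have "inverse (to_K uniformizer) \<in> DP"
    proof (rule DP_ideal_stabilizer_in_DP[OF J \<open>to_K d \<in> J\<close>])
      show "to_K d \<noteq> 0" using d(1) by simp
      show "inverse (to_K uniformizer) * a \<in> J" if "a \<in> J" for a
        using divide_uniformizer[OF J_PDP[OF that]] divide_uniformizer[OF all_PDP[OF that]]
        unfolding J_def by (simp add: mult.assoc)
    qed
    then show False using inverse_uniformizer_notin_DP by blast
  qed
  then show ?thesis using that J_PDP unfolding J_def by blast
qed

end

section \<open>The algebra \<open>A\<close>, its localisation \<open>A\<^sub>P\<close> and the ideals \<open>PA\<close> and \<open>P A\<^sub>P\<close>\<close>

locale dedekind_algebra = dedekind_prime P for P :: "'d::idom set" +
  fixes \<phi> :: "'d fract \<Rightarrow> 'b::ring_1" and A :: "'b set"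
  assumes std: "standard_assumptions \<phi> A"
begin

lemma central_ring_hom_phi: "central_ring_hom \<phi>"
proof -
  have add: "\<phi> (x + y) = \<phi> x + \<phi> y" for x y using std unfolding standard_assumptions_def by blast
  have "\<phi> 0 = 0" using add[of 0 0] by simp
  then show ?thesis using std unfolding standard_assumptions_def by unfold_locales blast+
qed

sublocale phi: central_ring_hom \<phi>
  by (rule central_ring_hom_phi)

sublocale phiK: central_ring_hom "\<phi> \<circ> to_K"
  by (rule central_ring_hom_comp_to_K[OF central_ring_hom_phi])

lemmas phi_hom_simps [simp] = phi.hom_add phi.hom_mult phi.hom_uminus phi.hom_minus

lemma phi_eq_iff: "\<phi> x = \<phi> y \<longleftrightarrow> x = y"
  using std unfolding standard_assumptions_def by (auto dest: injD)

lemma phi_left_commute: "\<phi> x * (b * c) = b * (\<phi> x * c)"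
  by (metis mult.assoc phi.hom_commutes)

lemma phi_inverse_cancel:
  assumes "x \<noteq> 0" shows "\<phi> (inverse x) * (\<phi> x * b) = b"
proof -
  have "\<phi> (inverse x) * (\<phi> x * b) = \<phi> (inverse x * x) * b"
    by (simp only: phi.hom_mult mult.assoc)
  then show ?thesis using assms by simp
qed

lemma A_one: "1 \<in> A"
  and A_add: "a \<in> A \<Longrightarrow> b \<in> A \<Longrightarrow> a + b \<in> A"
  and A_diff: "a \<in> A \<Longrightarrow> b \<in> A \<Longrightarrow> a - b \<in> A"
  and A_mult: "a \<in> A \<Longrightarrow> b \<in> A \<Longrightarrow> a * b \<in> A"
  and A_phi: "\<phi> (to_K d) \<in> A"
  using std unfolding standard_assumptions_def by blast+

lemma A_zero: "0 \<in> A"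
  using A_diff[OF A_one A_one] by simp

lemma A_uminus: "a \<in> A \<Longrightarrow> - a \<in> A"
  using A_diff[OF A_zero] by fastforce

lemma A_sum: "(\<And>i. i \<in> S \<Longrightarrow> f i \<in> A) \<Longrightarrow> sum f S \<in> A"
  by (induct S rule: infinite_finite_induct) (auto simp: A_zero A_add)

lemma A_power: "a \<in> A \<Longrightarrow> a ^ n \<in> A"
  by (induct n) (auto simp: A_one A_mult)

lemma A_inter_K: assumes "\<phi> k \<in> A" shows "\<exists>d. k = to_K d"
proof -
  have "\<phi> k \<in> A \<inter> range \<phi>" using assms by simp
  then obtain d where "\<phi> k = \<phi> (to_K d)" using std unfolding standard_assumptions_def by auto
  then show ?thesis using phi_eq_iff by blast
qed

lemma peval_in_A: "a \<in> A \<Longrightarrow> peval (\<phi> \<circ> to_K) g a \<in> A"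
  unfolding peval_def by (auto intro!: A_sum A_mult A_phi A_power)

definition AP :: "'b set" where
  "AP = loc_A \<phi> A P"

lemma AP_iff: "z \<in> AP \<longleftrightarrow> (\<exists>s a. s \<notin> P \<and> a \<in> A \<and> z = \<phi> (inverse (to_K s)) * a)"
  unfolding AP_def loc_A_def by blast

lemma AP_intro: "s \<notin> P \<Longrightarrow> a \<in> A \<Longrightarrow> \<phi> (inverse (to_K s)) * a \<in> AP"
  unfolding AP_iff by blast

lemma A_subset_AP: "a \<in> A \<Longrightarrow> a \<in> AP"
  using AP_intro[OF one_notin_P, of a] by simp

lemma AP_add: assumes "z \<in> AP" "w \<in> AP" shows "z + w \<in> AP"
proof -
  obtain s a where sa: "s \<notin> P" "a \<in> A" "z = \<phi> (inverse (to_K s)) * a"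
    using assms(1) AP_iff by blast
  obtain t b where tb: "t \<notin> P" "b \<in> A" "w = \<phi> (inverse (to_K t)) * b"
    using assms(2) AP_iff by blast
  have "inverse (to_K s) = inverse (to_K (s * t)) * to_K t"
    "inverse (to_K t) = inverse (to_K (s * t)) * to_K s"
    using notin_P_nonzero[OF sa(1)] notin_P_nonzero[OF tb(1)] by simp_all
  then have "z + w = \<phi> (inverse (to_K (s * t))) * (\<phi> (to_K t) * a + \<phi> (to_K s) * b)"
    unfolding sa(3) tb(3) by (simp only: phi.hom_mult distrib_left mult.assoc)
  moreover have "\<phi> (to_K t) * a + \<phi> (to_K s) * b \<in> A" using sa tb A_add A_mult A_phi by blast
  ultimately show ?thesis using AP_intro[OF notin_P_mult[OF sa(1) tb(1)]] by simp
qed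

lemma AP_mult: assumes "z \<in> AP" "w \<in> AP" shows "z * w \<in> AP"
proof -
  obtain s a where sa: "s \<notin> P" "a \<in> A" "z = \<phi> (inverse (to_K s)) * a"
    using assms(1) AP_iff by blast
  obtain t b where tb: "t \<notin> P" "b \<in> A" "w = \<phi> (inverse (to_K t)) * b"
    using assms(2) AP_iff by blast
  have "z * w = \<phi> (inverse (to_K s) * inverse (to_K t)) * (a * b)"
    unfolding sa(3) tb(3) phi.hom_mult mult.assoc phi_left_commute[of _ a] ..
  then show ?thesis using AP_intro[OF notin_P_mult[OF sa(1) tb(1)] A_mult[OF sa(2) tb(2)]]
    by (simp add: mult.commute)
qed

lemma AP_phi: assumes "z \<in> DP" shows "\<phi> z \<in> AP"
proof -
  obtain x s where xs: "s \<notin> P" "z = inverse (to_K s) * to_K x"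
    using assms DP_iff by (auto simp: divide_inverse mult.commute)
  then have "\<phi> z = \<phi> (inverse (to_K s)) * \<phi> (to_K x)" by simp
  then show ?thesis using AP_intro[OF xs(1) A_phi] by simp
qed

lemma AP_zero: "0 \<in> AP" and AP_one: "1 \<in> AP"
  using A_subset_AP A_zero A_one by blast+

lemma AP_sum: "(\<And>i. i \<in> S \<Longrightarrow> f i \<in> AP) \<Longrightarrow> sum f S \<in> AP"
  by (induct S rule: infinite_finite_induct) (auto simp: AP_zero AP_add)

lemma AP_power: "a \<in> AP \<Longrightarrow> a ^ n \<in> AP"
  by (induct n) (auto simp: AP_one AP_mult)

lemma AP_inter_K: assumes "\<phi> k \<in> AP" shows "k \<in> DP"
proof -
  obtain s a where sa: "s \<notin> P" "a \<in> A" "\<phi> k = \<phi> (inverse (to_K s)) * a" using assms AP_iff by blast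
  have "a = \<phi> (to_K s * k)"
    using sa(3) phi_inverse_cancel[of "inverse (to_K s)" a] sa(1) notin_P_nonzero by simp
  then obtain d where "to_K s * k = to_K d" using A_inter_K sa(2) by metis
  then have "k = to_K d / to_K s" using sa(1) notin_P_nonzero by (simp add: field_simps)
  then show ?thesis using DP_intro[OF sa(1)] by simp
qed

definition PA :: "'b set" where
  "PA = ext_ideal \<phi> A P"

lemma PA_iff: "x \<in> PA \<longleftrightarrow>
    (\<exists>(n::nat) p a. (\<forall>i<n. p i \<in> P \<and> a i \<in> A) \<and> x = (\<Sum>i<n. \<phi> (to_K (p i)) * a i))"
  unfolding PA_def ext_ideal_def by blast

lemma PA_zero: "0 \<in> PA"
  unfolding PA_iff by (rule exI[of _ 0]) simp

lemma PA_add_generator: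
  assumes "x \<in> PA" "p0 \<in> P" "a0 \<in> A" shows "x + \<phi> (to_K p0) * a0 \<in> PA"
proof -
  obtain n p a where h: "\<forall>i<(n::nat). p i \<in> P \<and> a i \<in> A" "x = (\<Sum>i<n. \<phi> (to_K (p i)) * a i)"
    using assms(1) unfolding PA_iff by blast
  show ?thesis unfolding PA_iff
  proof (intro exI conjI)
    show "\<forall>i<Suc n. (p(n := p0)) i \<in> P \<and> (a(n := a0)) i \<in> A" using h assms by (auto simp: less_Suc_eq)
    show "x + \<phi> (to_K p0) * a0 = (\<Sum>i<Suc n. \<phi> (to_K ((p(n := p0)) i)) * (a(n := a0)) i)"
      unfolding h(2) sum.lessThan_Suc by simp
  qed
qed

lemma PA_generator: "p \<in> P \<Longrightarrow> a \<in> A \<Longrightarrow> \<phi> (to_K p) * a \<in> PA"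
  using PA_add_generator[OF PA_zero] by simp

lemma PA_add: assumes "x \<in> PA" "y \<in> PA" shows "x + y \<in> PA"
proof -
  obtain n p a where h: "\<forall>i<(n::nat). p i \<in> P \<and> a i \<in> A" "y = (\<Sum>i<n. \<phi> (to_K (p i)) * a i)"
    using assms(2) unfolding PA_iff by blast
  have "m \<le> n \<Longrightarrow> x + (\<Sum>i<m. \<phi> (to_K (p i)) * a i) \<in> PA" for m
  proof (induct m)
    case (Suc m)
    then have "x + (\<Sum>i<m. \<phi> (to_K (p i)) * a i) + \<phi> (to_K (p m)) * a m \<in> PA"
      using PA_add_generator h(1) by simp
    then show ?case by (simp add: add.assoc)
  qed (use assms(1) in simp)
  then show ?thesis using h(2) by simp
qed

lemma PA_mult_left: assumes "b \<in> A" "x \<in> PA" shows "b * x \<in> PA"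
proof -
  obtain n p a where h: "\<forall>i<(n::nat). p i \<in> P \<and> a i \<in> A" "x = (\<Sum>i<n. \<phi> (to_K (p i)) * a i)"
    using assms(2) unfolding PA_iff by blast
  show ?thesis unfolding PA_iff
  proof (intro exI conjI)
    show "b * x = (\<Sum>i<n. \<phi> (to_K (p i)) * (b * a i))"
      unfolding h(2) sum_distrib_left by (rule sum.cong) (simp_all add: phi_left_commute)
    show "\<forall>i<n. p i \<in> P \<and> b * a i \<in> A" using h assms A_mult by blast
  qed
qed

lemma PA_mult_right: assumes "b \<in> A" "x \<in> PA" shows "x * b \<in> PA"
proof -
  obtain n p a where h: "\<forall>i<(n::nat). p i \<in> P \<and> a i \<in> A" "x = (\<Sum>i<n. \<phi> (to_K (p i)) * a i)"
    using assms(2) unfolding PA_iff by blast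
  show ?thesis unfolding PA_iff
  proof (intro exI conjI)
    show "x * b = (\<Sum>i<n. \<phi> (to_K (p i)) * (a i * b))"
      unfolding h(2) sum_distrib_right by (simp add: mult.assoc)
    show "\<forall>i<n. p i \<in> P \<and> a i * b \<in> A" using h assms A_mult by blast
  qed
qed

lemma PA_diff: assumes "x \<in> PA" "y \<in> PA" shows "x - y \<in> PA"
  using PA_add[OF assms(1) PA_mult_left[OF A_uminus[OF A_one] assms(2)]] by simp

lemma PA_sum: "(\<And>i. i \<in> S \<Longrightarrow> f i \<in> PA) \<Longrightarrow> sum f S \<in> PA"
  by (induct S rule: infinite_finite_induct) (auto simp: PA_zero PA_add)

text \<open>\<open>P A\<^sub>P = \<pi> A\<^sub>P\<close>, as \<open>P D\<^sub>P = \<pi> D\<^sub>P\<close>.\<close>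
definition PAP :: "'b set" where
  "PAP = {\<phi> (to_K uniformizer) * z | z. z \<in> AP}"

lemma PAP_zero: "0 \<in> PAP"
  unfolding PAP_def using AP_zero by force

lemma PAP_add: "x \<in> PAP \<Longrightarrow> y \<in> PAP \<Longrightarrow> x + y \<in> PAP"
  unfolding PAP_def using AP_add by (force simp: distrib_left)

lemma PAP_mult_left: assumes "w \<in> AP" "x \<in> PAP" shows "w * x \<in> PAP"
proof -
  obtain z where z: "z \<in> AP" "x = \<phi> (to_K uniformizer) * z" using assms(2) PAP_def by blast
  have "w * x = \<phi> (to_K uniformizer) * (w * z)" unfolding z(2) by (rule phi_left_commute[symmetric])
  then show ?thesis using AP_mult[OF assms(1) z(1)] PAP_def by blast
qed

lemma PAP_mult_right: assumes "w \<in> AP" "x \<in> PAP" shows "x * w \<in> PAP"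
proof -
  obtain z where z: "z \<in> AP" "x = \<phi> (to_K uniformizer) * z" using assms(2) PAP_def by blast
  have "x * w = \<phi> (to_K uniformizer) * (z * w)" unfolding z(2) by (simp add: mult.assoc)
  then show ?thesis using AP_mult[OF z(1) assms(1)] PAP_def by blast
qed

lemma PAP_sum: "(\<And>i. i \<in> S \<Longrightarrow> f i \<in> PAP) \<Longrightarrow> sum f S \<in> PAP"
  by (induct S rule: infinite_finite_induct) (auto simp: PAP_zero PAP_add)

lemma PDP_times_AP_subset_PAP: assumes "c \<in> PDP" "z \<in> AP" shows "\<phi> c * z \<in> PAP"
proof -
  obtain w where w: "w \<in> DP" "c = to_K uniformizer * w" using assms(1) PDP_iff_uniformizer_multiple by blast
  have "\<phi> c * z = \<phi> (to_K uniformizer) * (\<phi> w * z)" using w(2) by (simp add: mult.assoc)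
  then show ?thesis using AP_mult[OF AP_phi[OF w(1)] assms(2)] PAP_def by blast
qed

lemma PA_subset_PAP: assumes "x \<in> PA" shows "x \<in> PAP"
proof -
  obtain n p a where h: "\<forall>i<(n::nat). p i \<in> P \<and> a i \<in> A" "x = (\<Sum>i<n. \<phi> (to_K (p i)) * a i)"
    using assms unfolding PA_iff by blast
  show ?thesis unfolding h(2)
    using PDP_times_AP_subset_PAP[OF iffD2[OF PDP_to_K_iff] A_subset_AP] h(1) by (blast intro: PAP_sum)
qed

text \<open>From \<open>s x \<in> PA\<close> with \<open>s \<notin> P\<close>, write \<open>1 = p + s t\<close>.\<close>
lemma PAP_inter_A_subset_PA: assumes "x \<in> PAP" "x \<in> A" shows "x \<in> PA"
proof -
  obtain z where z: "z \<in> AP" "x = \<phi> (to_K uniformizer) * z" using assms(1) PAP_def by blast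
  obtain s a where sa: "s \<notin> P" "a \<in> A" "z = \<phi> (inverse (to_K s)) * a" using z(1) AP_iff by blast
  have "\<phi> (to_K s) * x = \<phi> (to_K uniformizer) * (\<phi> (to_K s) * z)"
    unfolding z(2) by (rule phi_left_commute)
  also have "\<phi> (to_K s) * z = a"
    unfolding sa(3) using phi_inverse_cancel[of "to_K s" a] notin_P_nonzero[OF sa(1)]
    by (simp add: mult.assoc[symmetric] flip: phi.hom_mult)
  finally have sx: "\<phi> (to_K s) * x \<in> PA" using PA_generator[OF uniformizer_spec(1) sa(2)] by simp
  obtain t p where tp: "p \<in> P" "1 = p + s * t" using unit_mod_P[OF sa(1)] by blast
  have "x = \<phi> (to_K (p + s * t)) * x" using tp by simp
  also have "\<dots> = \<phi> (to_K p) * x + \<phi> (to_K t) * (\<phi> (to_K s) * x)"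
    by (simp add: distrib_right mult.assoc mult.commute[of s])
  finally have split: "x = \<phi> (to_K p) * x + \<phi> (to_K t) * (\<phi> (to_K s) * x)" .
  show ?thesis
    by (subst split) (rule PA_add[OF PA_generator[OF tp(1) assms(2)] PA_mult_left[OF A_phi sx]])
qed

lemma in_P_if_to_K_in_PAP: assumes "\<phi> (to_K d) \<in> PAP" shows "d \<in> P"
proof -
  obtain z where z: "z \<in> AP" "\<phi> (to_K d) = \<phi> (to_K uniformizer) * z" using assms PAP_def by blast
  then have "z = \<phi> (inverse (to_K uniformizer) * to_K d)"
    using phi_inverse_cancel[of "to_K uniformizer" z] uniformizer_spec(2) by simp
  then have "inverse (to_K uniformizer) * to_K d \<in> DP" using AP_inter_K z(1) by simp
  then obtain x s where xs: "s \<notin> P" "inverse (to_K uniformizer) * to_K d = to_K x / to_K s"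
    using DP_iff by blast
  then have "to_K d * to_K s = to_K uniformizer * to_K x"
    using uniformizer_spec(2) notin_P_nonzero[OF xs(1)] by (simp add: field_simps)
  then have "d * s = uniformizer * x" by (metis to_K.hom_mult to_K.eq_iff)
  then have "d * s \<in> P" using P_mult_right uniformizer_spec(1) by simp
  then show ?thesis using P_prime xs(1) by blast
qed

lemma peval_in_AP: "(\<And>i. coeff f i \<in> DP) \<Longrightarrow> u \<in> AP \<Longrightarrow> peval \<phi> f u \<in> AP"
  unfolding peval_def by (auto intro!: AP_sum AP_mult AP_phi AP_power)

lemma DP_poly_subset_Int_K: "{f. \<forall>i. coeff f i \<in> loc_D P} \<subseteq> Int_K \<phi> (loc_A \<phi> A P)"
  unfolding Int_K_def DP_def[symmetric] AP_def[symmetric] using peval_in_AP by blast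

lemma power_diff_in_PAP:
  assumes "u \<in> AP" "v \<in> AP" "u - v \<in> PAP" shows "u ^ n - v ^ n \<in> PAP"
proof (induct n)
  case (Suc n)
  have "u ^ Suc n - v ^ Suc n = u * (u ^ n - v ^ n) + (u - v) * v ^ n"
    by (simp add: algebra_simps)
  then show ?case
    using PAP_add[OF PAP_mult_left[OF assms(1) Suc] PAP_mult_right[OF AP_power[OF assms(2)] assms(3)]]
    by simp
qed (simp add: PAP_zero)

lemma peval_diff_in_PAP:
  assumes "u \<in> AP" "v \<in> AP" "u - v \<in> PAP"
  shows "peval (\<phi> \<circ> to_K) g u - peval (\<phi> \<circ> to_K) g v \<in> PAP"
proof -
  have "peval (\<phi> \<circ> to_K) g u - peval (\<phi> \<circ> to_K) g v =
      (\<Sum>i\<le>degree g. \<phi> (to_K (coeff g i)) * (u ^ i - v ^ i))"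
    unfolding peval_def by (simp add: sum_subtractf right_diff_distrib)
  also have "\<dots> \<in> PAP"
    by (rule PAP_sum, rule PAP_mult_left[OF AP_phi[OF DP_to_K] power_diff_in_PAP[OF assms]])
  finally show ?thesis .
qed

text \<open>Each element of \<open>A\<^sub>P\<close> is congruent modulo \<open>P A\<^sub>P\<close> to an element of \<open>A\<close>.\<close>
lemma peval_in_PAP_if_null_mod_PA:
  assumes null: "\<forall>a\<in>A. peval (\<phi> \<circ> to_K) g a \<in> PA" and u: "u \<in> AP"
  shows "peval (\<phi> \<circ> to_K) g u \<in> PAP"
proof -
  obtain s a where sa: "s \<notin> P" "a \<in> A" "u = \<phi> (inverse (to_K s)) * a" using u AP_iff by blast
  obtain t p where tp: "p \<in> P" "1 = p + s * t" using unit_mod_P[OF sa(1)] by blast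
  define v where "v = \<phi> (to_K t) * a"
  have v: "v \<in> A" unfolding v_def using A_mult A_phi sa(2) by blast
  have "inverse (to_K s) - to_K t = inverse (to_K s) * to_K p"
    using arg_cong[OF tp(2), of to_K] notin_P_nonzero[OF sa(1)] by (simp add: field_simps)
  then have "u - v = \<phi> (inverse (to_K s) * to_K p) * a"
    unfolding sa(3) v_def by (simp flip: left_diff_distrib phi.hom_minus)
  then have "u - v \<in> PAP"
    using PDP_times_AP_subset_PAP[OF PDP_mult[OF DP_inverse_to_K[OF sa(1)] iffD2[OF PDP_to_K_iff tp(1)]]
        A_subset_AP[OF sa(2)]] by simp
  then have "peval (\<phi> \<circ> to_K) g u - peval (\<phi> \<circ> to_K) g v \<in> PAP"
    using peval_diff_in_PAP u A_subset_AP[OF v] by blast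
  moreover have "peval (\<phi> \<circ> to_K) g v \<in> PAP" using null v PA_subset_PAP by blast
  ultimately show ?thesis using PAP_add by force
qed

theorem null_ideal_imp_DP_poly_psubset_Int_K:
  assumes "null_ideal_mod_nonzero \<phi> A P"
  shows "{f. \<forall>i. coeff f i \<in> loc_D P} \<subset> Int_K \<phi> (loc_A \<phi> A P)"
proof -
  obtain g i0 where g: "coeff g i0 \<notin> P" and null: "\<forall>a\<in>A. peval (\<phi> \<circ> to_K) g a \<in> PA"
    using assms unfolding null_ideal_mod_nonzero_def PA_def by blast
  define f where "f = Polynomial.smult (inverse (to_K uniformizer)) (map_poly to_K g)"
  have "peval \<phi> f u \<in> AP" if u: "u \<in> AP" for u
  proof -
    obtain z where z: "z \<in> AP" "peval (\<phi> \<circ> to_K) g u = \<phi> (to_K uniformizer) * z"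
      using peval_in_PAP_if_null_mod_PA[OF null u] PAP_def by blast
    have "peval \<phi> f u = \<phi> (inverse (to_K uniformizer)) * peval (\<phi> \<circ> to_K) g u"
      unfolding f_def by (simp add: phi.peval_smult phi.peval_map_poly)
    also have "\<dots> = z" unfolding z(2) using phi_inverse_cancel uniformizer_spec(2) by simp
    finally show ?thesis using z(1) by simp
  qed
  then have "f \<in> Int_K \<phi> (loc_A \<phi> A P)" unfolding Int_K_def AP_def by blast
  moreover have "coeff f i0 \<notin> DP"
  proof
    assume "coeff f i0 \<in> DP"
    then have "coeff f i0 * inverse (to_K (coeff g i0)) \<in> DP" using DP_mult DP_inverse_to_K[OF g] by blast
    moreover have "coeff f i0 * inverse (to_K (coeff g i0)) = inverse (to_K uniformizer)"
      using notin_P_nonzero[OF g] unfolding f_def by (simp add: coeff_map_poly)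
    ultimately show False using inverse_uniformizer_notin_DP by simp
  qed
  ultimately show ?thesis using DP_poly_subset_Int_K unfolding DP_def by blast
qed

theorem DP_poly_psubset_Int_K_imp_null_ideal:
  assumes "{f. \<forall>i. coeff f i \<in> loc_D P} \<subset> Int_K \<phi> (loc_A \<phi> A P)"
  shows "null_ideal_mod_nonzero \<phi> A P"
proof -
  obtain f i0 where f_Int: "\<And>u. u \<in> AP \<Longrightarrow> peval \<phi> f u \<in> AP" and i0: "coeff f i0 \<notin> DP"
    using assms unfolding Int_K_def AP_def DP_def by blast
  obtain c i1 where c: "c \<in> PDP" "\<And>i. c * coeff f i \<in> DP" and i1: "c * coeff f i1 \<notin> PDP"
    using exists_primitive_multiple[OF i0] by blast
  obtain S where S: "S \<notin> P" "\<And>i. \<exists>e. to_K S * (c * coeff f i) = to_K e"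
    using DP_common_denominator[of "Polynomial.smult c f"] c(2) by auto
  have "\<exists>e. coeff (Polynomial.smult (to_K S * c) f) i = to_K e" for i
    using S(2)[of i] by (auto simp: mult.assoc)
  then obtain g where g: "map_poly to_K g = Polynomial.smult (to_K S * c) f"
    using poly_lift_to_K by blast
  have g_coeff: "to_K (coeff g i) = to_K S * (c * coeff f i)" for i
    using arg_cong[OF g, of "\<lambda>h. coeff h i"] by (simp add: coeff_map_poly mult.assoc)
  have "coeff g i1 \<notin> P"
  proof
    assume "coeff g i1 \<in> P"
    then have "inverse (to_K S) * to_K (coeff g i1) \<in> PDP"
      using PDP_mult[OF DP_inverse_to_K[OF S(1)]] PDP_to_K_iff by blast
    then show False using i1 notin_P_nonzero[OF S(1)] by (simp add: g_coeff mult.assoc[symmetric])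
  qed
  moreover have "peval (\<phi> \<circ> to_K) g a \<in> PA" if a: "a \<in> A" for a
  proof -
    have "peval (\<phi> \<circ> to_K) g a = \<phi> (to_K S) * (\<phi> c * peval \<phi> f a)"
      using phi.peval_map_poly[of to_K g a, symmetric] unfolding g
      by (simp add: phi.peval_smult mult.assoc)
    also have "\<dots> \<in> PAP"
      using PAP_mult_left[OF AP_phi[OF DP_to_K] PDP_times_AP_subset_PAP[OF c(1) f_Int[OF A_subset_AP[OF a]]]] .
    finally show ?thesis using PAP_inter_A_subset_PA peval_in_A[OF a] by blast
  qed
  ultimately show ?thesis unfolding null_ideal_mod_nonzero_def PA_def[symmetric] by blast
qed

lemma peval_at_D: "peval (\<phi> \<circ> to_K) g (\<phi> (to_K d)) = \<phi> (to_K (poly g d))"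
  unfolding peval_def poly_altdef by (simp add: to_K.hom_sum phi.hom_sum phi.hom_power)

theorem null_ideal_imp_finite_bounded_degree:
  assumes "null_ideal_mod_nonzero \<phi> A P"
  shows "finite (quot_ring P) \<and> bounded_degree_mod \<phi> A P"
proof
  obtain g i0 where g: "coeff g i0 \<notin> P" and null: "\<forall>a\<in>A. peval (\<phi> \<circ> to_K) g a \<in> PA"
    using assms unfolding null_ideal_mod_nonzero_def PA_def by blast
  show "bounded_degree_mod \<phi> A P" unfolding bounded_degree_mod_def PA_def[symmetric]
    using g null by (intro exI[of _ "degree g"] ballI exI[of _ g]) (auto simp: coeff_eq_0)
  have roots: "poly g d \<in> P" for d
    using null A_phi PA_subset_PAP in_P_if_to_K_in_PAP peval_at_D by metis
  show "finite (quot_ring P)"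
  proof (rule ccontr)
    assume "infinite (quot_ring P)"
    then obtain T where T: "finite T" "card T = Suc (degree g)" "incongruent T"
      by (rule infinite_quot_ring_incongruent_set)
    then have "coeff g i0 \<in> P" using coeff_in_P_if_roots_mod_P[OF T(1) T(3) roots] by simp
    then show False using g by simp
  qed
qed

definition low_powers_mod_PA :: "'b \<Rightarrow> nat \<Rightarrow> 'b set" where
  "low_powers_mod_PA a m = {(\<Sum>i<m. \<phi> (to_K (d i)) * a ^ i) + w | d w. w \<in> PA}"

lemma PA_subset_low_powers: "w \<in> PA \<Longrightarrow> w \<in> low_powers_mod_PA a m"
  unfolding low_powers_mod_PA_def by (intro CollectI exI[of _ "\<lambda>i. 0"] exI[of _ w]) simp

lemma low_powers_add:
  assumes "x \<in> low_powers_mod_PA a m" "y \<in> low_powers_mod_PA a m"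
  shows "x + y \<in> low_powers_mod_PA a m"
proof -
  obtain d1 w1 where 1: "w1 \<in> PA" "x = (\<Sum>i<m. \<phi> (to_K (d1 i)) * a ^ i) + w1"
    using assms(1) unfolding low_powers_mod_PA_def by blast
  obtain d2 w2 where 2: "w2 \<in> PA" "y = (\<Sum>i<m. \<phi> (to_K (d2 i)) * a ^ i) + w2"
    using assms(2) unfolding low_powers_mod_PA_def by blast
  have "x + y = (\<Sum>i<m. \<phi> (to_K (d1 i + d2 i)) * a ^ i) + (w1 + w2)"
    unfolding 1 2 by (simp add: sum.distrib distrib_right algebra_simps)
  then show ?thesis unfolding low_powers_mod_PA_def
    by (intro CollectI exI[of _ "\<lambda>i. d1 i + d2 i"] exI[of _ "w1 + w2"] conjI PA_add[OF 1(1) 2(1)])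
qed

lemma low_powers_scale:
  assumes "x \<in> low_powers_mod_PA a m" shows "\<phi> (to_K e) * x \<in> low_powers_mod_PA a m"
proof -
  obtain d w where 1: "w \<in> PA" "x = (\<Sum>i<m. \<phi> (to_K (d i)) * a ^ i) + w"
    using assms unfolding low_powers_mod_PA_def by blast
  have "\<phi> (to_K e) * x = (\<Sum>i<m. \<phi> (to_K (e * d i)) * a ^ i) + \<phi> (to_K e) * w"
    unfolding 1 by (simp add: distrib_left sum_distrib_left mult.assoc)
  then show ?thesis unfolding low_powers_mod_PA_def
    by (intro CollectI exI[of _ "\<lambda>i. e * d i"] exI[of _ "\<phi> (to_K e) * w"] conjI PA_mult_left[OF A_phi 1(1)])
qed

lemma low_powers_sum:
  "(\<And>i. i \<in> S \<Longrightarrow> f i \<in> low_powers_mod_PA a m) \<Longrightarrow> sum f S \<in> low_powers_mod_PA a m"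
  by (induct S rule: infinite_finite_induct)
    (auto simp: PA_subset_low_powers[OF PA_zero] low_powers_add)

lemma power_in_low_powers: assumes "i < m" shows "a ^ i \<in> low_powers_mod_PA a m"
proof -
  have "a ^ i = (\<Sum>j<m. \<phi> (to_K (if j = i then 1 else 0)) * a ^ j) + 0"
    using assms by (simp add: if_distrib[of "\<lambda>c. \<phi> (to_K c) * _"] sum.delta cong: if_cong)
  then show ?thesis unfolding low_powers_mod_PA_def
    by (intro CollectI exI[of _ "\<lambda>j. if j = i then 1 else 0"] exI[of _ 0] conjI PA_zero)
qed

text \<open>If \<open>g\<close> has its last coefficient outside \<open>P\<close> in degree \<open>m\<close> and \<open>g(a) \<in> PA\<close>, then
  modulo \<open>PA\<close> the power \<open>a\<^sup>m\<close> is a \<open>D\<close>-combination of lower powers (\<open>lc(g)\<close> is a unit mod \<open>P\<close>).\<close>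
lemma top_power_in_low_powers:
  assumes a: "a \<in> A" and m: "coeff g m \<notin> P" "\<And>i. i > m \<Longrightarrow> coeff g i \<in> P"
    and null: "peval (\<phi> \<circ> to_K) g a \<in> PA"
  shows "a ^ m \<in> low_powers_mod_PA a m"
proof -
  obtain t p where tp: "p \<in> P" "1 = p + coeff g m * t" using unit_mod_P[OF m(1)] by blast
  define f where "f i = \<phi> (to_K (coeff g i)) * a ^ i" for i
  define W where "W = (\<Sum>i\<le>degree g. if i \<le> m then 0 else f i)"
  have "m \<le> degree g" using m(1) by (metis le_degree zero_in_P)
  have "(\<Sum>i\<le>degree g. f i) = (\<Sum>i\<le>degree g. if i \<le> m then f i else 0) + W"
    unfolding W_def by (simp add: sum.distrib[symmetric] if_distrib cong: if_cong)
  also have "(\<Sum>i\<le>degree g. if i \<le> m then f i else 0) = (\<Sum>i\<le>m. f i)"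
  proof -
    have "{..degree g} \<inter> {i. i \<le> m} = {..m}" using \<open>m \<le> degree g\<close> by auto
    then show ?thesis by (simp add: sum.If_cases)
  qed
  finally have "peval (\<phi> \<circ> to_K) g a = (\<Sum>i<m. f i) + f m + W"
    unfolding peval_def f_def by (simp add: lessThan_Suc_atMost[symmetric])
  then have "\<phi> (to_K t) * peval (\<phi> \<circ> to_K) g a =
      (\<Sum>i<m. \<phi> (to_K (t * coeff g i)) * a ^ i) + \<phi> (to_K (t * coeff g m)) * a ^ m + \<phi> (to_K t) * W"
    unfolding f_def by (simp add: distrib_left sum_distrib_left mult.assoc)
  moreover have "\<phi> (to_K (t * coeff g m)) * a ^ m = a ^ m - \<phi> (to_K p) * a ^ m"
  proof -
    have "t * coeff g m = 1 - p" using tp(2) by (simp add: algebra_simps)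
    then have "\<phi> (to_K (t * coeff g m)) = 1 - \<phi> (to_K p)"
      by (simp only: to_K.hom_minus to_K.hom_one phi.hom_minus phi.hom_one)
    then show ?thesis by (simp only: left_diff_distrib mult_1_left)
  qed
  moreover define w where "w = \<phi> (to_K t) * peval (\<phi> \<circ> to_K) g a - \<phi> (to_K t) * W + \<phi> (to_K p) * a ^ m"
  ultimately have split: "a ^ m = (\<Sum>i<m. \<phi> (to_K (- (t * coeff g i))) * a ^ i) + w"
    by (simp add: sum_negf algebra_simps)
  have "W \<in> PA"
    unfolding W_def f_def by (rule PA_sum) (auto simp: PA_zero m(2) intro!: PA_generator A_power a)
  then have "w \<in> PA" unfolding w_def
    by (intro PA_add PA_diff PA_mult_left[OF A_phi] null PA_generator[OF tp(1) A_power[OF a]])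
  then show ?thesis unfolding low_powers_mod_PA_def
    by (subst split) (intro CollectI exI[of _ "\<lambda>i. - (t * coeff g i)"] exI[of _ w] conjI refl)
qed

lemma all_powers_in_low_powers:
  assumes a: "a \<in> A" and top: "a ^ m \<in> low_powers_mod_PA a m"
  shows "a ^ k \<in> low_powers_mod_PA a m"
proof (induct k)
  case 0
  then show ?case using power_in_low_powers[of 0 m a] top by (cases m) simp_all
next
  case (Suc k)
  obtain d w where 1: "w \<in> PA" "a ^ k = (\<Sum>i<m. \<phi> (to_K (d i)) * a ^ i) + w"
    using Suc unfolding low_powers_mod_PA_def by blast
  have split: "a ^ Suc k = (\<Sum>i<m. \<phi> (to_K (d i)) * a ^ Suc i) + a * w"
    unfolding power_Suc 1 distrib_left sum_distrib_left by (simp add: phi_left_commute[of _ a])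
  have "a ^ Suc i \<in> low_powers_mod_PA a m" if "i < m" for i
    using power_in_low_powers[of "Suc i"] top that by (cases "Suc i = m") auto
  then have "(\<Sum>i<m. \<phi> (to_K (d i)) * a ^ Suc i) \<in> low_powers_mod_PA a m"
    by (intro low_powers_sum low_powers_scale) simp
  then show ?case
    by (subst split) (rule low_powers_add[OF _ PA_subset_low_powers[OF PA_mult_left[OF a 1(1)]]])
qed

lemma low_powers_finite_representatives:
  assumes R: "\<And>d. \<exists>r\<in>R. d - r \<in> P" and a: "a \<in> A" and x: "x \<in> low_powers_mod_PA a m"
  shows "\<exists>r\<in>{..<m} \<rightarrow>\<^sub>E R. x - (\<Sum>i<m. \<phi> (to_K (r i)) * a ^ i) \<in> PA"
proof -
  obtain d w where dw: "w \<in> PA" "x = (\<Sum>i<m. \<phi> (to_K (d i)) * a ^ i) + w"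
    using x unfolding low_powers_mod_PA_def by blast
  define r where "r i = (if i < m then (SOME r. r \<in> R \<and> d i - r \<in> P) else undefined)" for i
  have r: "r i \<in> R" "d i - r i \<in> P" if "i < m" for i
    using that someI_ex[OF R[of "d i", unfolded Bex_def]] unfolding r_def by auto
  have "r \<in> {..<m} \<rightarrow>\<^sub>E R"
  proof (rule PiE_I)
    show "r i = undefined" if "i \<notin> {..<m}" for i using that unfolding r_def by simp
  qed (use r(1) in blast)
  moreover have split: "x - (\<Sum>i<m. \<phi> (to_K (r i)) * a ^ i) = (\<Sum>i<m. \<phi> (to_K (d i - r i)) * a ^ i) + w"
    unfolding dw by (simp add: left_diff_distrib sum_subtractf algebra_simps)
  moreover have "(\<Sum>i<m. \<phi> (to_K (d i - r i)) * a ^ i) \<in> PA"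
    using r(2) by (intro PA_sum PA_generator A_power a) simp
  ultimately show ?thesis by (intro bexI[of _ r]) (subst split, rule PA_add[OF _ dw(1)])
qed

text \<open>The powers of \<open>a\<close> fall into at most \<open>|D/P|\<^sup>n\<close> classes modulo \<open>PA\<close>, so two of the first
  \<open>|D/P|\<^sup>n + 1\<close> of them coincide.\<close>
lemma power_collision_mod_PA:
  assumes R: "finite R" "R \<noteq> {}" "\<And>d. \<exists>r\<in>R. d - r \<in> P" and a: "a \<in> A"
    and g: "coeff g i0 \<notin> P" "\<And>i. i > n \<Longrightarrow> coeff g i \<in> P" "peval (\<phi> \<circ> to_K) g a \<in> PA"
  shows "\<exists>i j. i < j \<and> j \<le> card R ^ n \<and> a ^ j - a ^ i \<in> PA"
proof -
  define Z where "Z = {i. coeff g i \<notin> P}"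
  have "Z \<subseteq> {..n}" using g(2) unfolding Z_def by (auto simp: not_less[symmetric])
  then have Z: "finite Z" "i0 \<in> Z" using g(1) finite_subset unfolding Z_def by auto
  define m where "m = Max Z"
  have "Z \<noteq> {}" using Z(2) by blast
  then have m: "coeff g m \<notin> P" "m \<le> n"
    using Max_in[OF Z(1)] \<open>Z \<subseteq> {..n}\<close> unfolding m_def Z_def by auto
  have above_m: "coeff g i \<in> P" if "i > m" for i
    using that Max_ge[OF Z(1), of i] unfolding m_def Z_def by fastforce
  define V where "V = (\<lambda>r. \<Sum>i<m. \<phi> (to_K (r i)) * a ^ i) ` ({..<m} \<rightarrow>\<^sub>E R)"
  have V: "finite V" using R(1) unfolding V_def by (simp add: finite_PiE)
  have "card V \<le> card ({..<m} \<rightarrow>\<^sub>E R)" unfolding V_def using R(1) by (simp add: card_image_le finite_PiE)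
  also have "\<dots> = card R ^ m" by (simp add: card_PiE)
  also have "\<dots> \<le> card R ^ n" using m(2) R(1,2) by (simp add: power_increasing Suc_le_eq card_gt_0_iff)
  finally have card_V: "card V \<le> card R ^ n" .
  have "\<forall>k. \<exists>v. v \<in> V \<and> a ^ k - v \<in> PA"
    using low_powers_finite_representatives[OF R(3) a
        all_powers_in_low_powers[OF a top_power_in_low_powers[OF a m(1) above_m g(3)]]]
    unfolding V_def by blast
  from choice[OF this] obtain v where v: "\<And>k. v k \<in> V" "\<And>k. a ^ k - v k \<in> PA" by blast
  define N where "N = card R ^ n"
  have "card (v ` {0..N}) \<le> card V" using v(1) V by (intro card_mono) auto
  then have "\<not> inj_on v {0..N}" using card_V unfolding N_def by (intro pigeonhole) simp
  then obtain k1 k2 where k: "k1 \<le> N" "k2 \<le> N" "k1 \<noteq> k2" "v k1 = v k2"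
    unfolding inj_on_def by auto
  define i where "i = min k1 k2"
  define j where "j = max k1 k2"
  have "v i = v j" "i < j" "j \<le> N" using k unfolding i_def j_def by (auto simp: min_def max_def)
  moreover have "a ^ j - a ^ i = (a ^ j - v j) - (a ^ i - v i)" using \<open>v i = v j\<close> by simp
  ultimately show ?thesis using PA_diff[OF v(2) v(2)] unfolding N_def by metis
qed

lemma peval_prod_in_PA:
  assumes "finite S" "x0 \<in> S" "peval (\<phi> \<circ> to_K) (h x0) a \<in> PA" "a \<in> A"
  shows "peval (\<phi> \<circ> to_K) (\<Prod>x\<in>S. h x) a \<in> PA"
proof -
  have "(\<Prod>x\<in>S. h x) = h x0 * (\<Prod>x\<in>S - {x0}. h x)" using assms(1,2) by (rule prod.remove)
  then show ?thesis using PA_mult_right[OF peval_in_A[OF assms(4)] assms(3)] by (simp add: phiK.peval_mult)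
qed

theorem finite_bounded_degree_imp_null_ideal:
  assumes "finite (quot_ring P)" and "bounded_degree_mod \<phi> A P"
  shows "null_ideal_mod_nonzero \<phi> A P"
proof -
  obtain R where R: "finite R" "R \<noteq> {}" "\<And>d. \<exists>r\<in>R. d - r \<in> P"
    using finite_quot_ring_representatives[OF assms(1)] by blast
  obtain n where bounded: "\<forall>a\<in>A. \<exists>g. (\<exists>i. coeff g i \<notin> P) \<and> (\<forall>i>n. coeff g i \<in> P) \<and>
      peval (\<phi> \<circ> to_K) g a \<in> PA"
    using assms(2) unfolding bounded_degree_mod_def PA_def by blast
  define N where "N = card R ^ n"
  define Pairs where "Pairs = {(i, j). i < j \<and> j \<le> N}"
  have "finite Pairs" unfolding Pairs_def by (rule finite_subset[of _ "{..N} \<times> {..N}"]) auto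
  define G where "G = (\<Prod>(i, j)\<in>Pairs. monom (1::'d) j - monom 1 i)"
  have "lead_coeff G = (\<Prod>x\<in>Pairs. lead_coeff ((\<lambda>(i, j). monom (1::'d) j - monom 1 i) x))"
    unfolding G_def by (rule lead_coeff_prod)
  also have "\<dots> = 1"
  proof (rule prod.neutral, intro ballI)
    fix x assume "x \<in> Pairs"
    then obtain i j where ij: "x = (i, j)" "i < j" unfolding Pairs_def by blast
    then have "(\<lambda>(i, j). monom (1::'d) j - monom 1 i) x = monom 1 j - monom 1 i" by simp
    then show "lead_coeff ((\<lambda>(i, j). monom (1::'d) j - monom 1 i) x) = 1"
      using lead_coeff_monom_diff[OF ij(2)] by (simp only:)
  qed
  finally have "lead_coeff G = 1" .
  then have "coeff G (degree G) \<notin> P" using one_notin_P by simp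
  moreover have "peval (\<phi> \<circ> to_K) G a \<in> PA" if a: "a \<in> A" for a
  proof -
    obtain g i0 where "coeff g i0 \<notin> P" "\<forall>i>n. coeff g i \<in> P" "peval (\<phi> \<circ> to_K) g a \<in> PA"
      using bounded a by blast
    then obtain i j where ij: "i < j" "j \<le> N" "a ^ j - a ^ i \<in> PA"
      using power_collision_mod_PA[OF R a] unfolding N_def by blast
    have "peval (\<phi> \<circ> to_K) (monom 1 j - monom 1 i) a \<in> PA"
      using ij(3) by (simp add: phiK.peval_diff phiK.peval_monom_1)
    then show ?thesis unfolding G_def
      using peval_prod_in_PA[OF \<open>finite Pairs\<close>, of "(i, j)" "\<lambda>(i, j). monom 1 j - monom 1 i" a] ij a
      by (simp add: Pairs_def)
  qed
  ultimately show ?thesis unfolding null_ideal_mod_nonzero_def PA_def[symmetric] by blast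
qed

end

theorem mainTheorem8:
  fixes \<phi> :: "'d::idom fract \<Rightarrow> 'b::ring_1"
    and A :: "'b set" and P :: "'d set"
  assumes "dedekind_domain TYPE('d)"
    and "standard_assumptions \<phi> A"
    and "is_prime_ideal P" and "P \<noteq> {0}"
  shows "(null_ideal_mod_nonzero \<phi> A P
            \<longleftrightarrow> {f. \<forall>i. coeff f i \<in> loc_D P} \<subset> Int_K \<phi> (loc_A \<phi> A P))
       \<and> (null_ideal_mod_nonzero \<phi> A P
            \<longleftrightarrow> finite (quot_ring P) \<and> bounded_degree_mod \<phi> A P)"
proof -
  interpret dedekind_algebra P \<phi> A
    using assms by unfold_locales
  show ?thesis
    using null_ideal_imp_DP_poly_psubset_Int_K DP_poly_psubset_Int_K_imp_null_ideal
      null_ideal_imp_finite_bounded_degree finite_bounded_degree_imp_null_ideal by blast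
qed

end
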